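(* Let $f\colon X\to X$ be a homeomorphism of a compact metric space with the L-shadowing property and let $C$ be a chain recurrent class of $f$. Then there exist $n\ge1$ and pairwise disjoint compact sets $C_1,\dots,C_n\subset C$, each $f^n$-invariant, such that $C=\bigcup_{i=1}^n C_i$, $f(C_i)=C_{(i+1)\bmod n}$, and for each $i$ the restriction $f^n|_{C_i}$ is topologically mixing and has the two-sided limit shadowing property.
   Context: L-shadowing: for every $\varepsilon>0$ there is $\delta>0$ such that every sequence $(x_k)_{k\in\mathbb{Z}}$ with $d(f(x_k),x_{k+1})\le\delta$ for all $k$ and $d(f(x_k),x_{k+1})\to0$ as $|k|\to\infty$ admits $z$ with $d(f^k(z),x_k)\le\varepsilon$ for all $k$ and $d(f^k(z),x_k)\to0$ as $|k|\to\infty$. A $\varepsilon$-pseudo orbit is a sequence with $d(f(x_k),x_{k+1})<\varepsilon$; the chain recurrent class of $x$ is the set of $y$ such that for every $\varepsilon>0$ there is a periodic $\varepsilon$-pseudo orbit containing $x$ and $y$. A homeomorphism $g$ of a compact metric space $Y$ has the two-sided limit shadowing property if for every sequence $(y_k)_{k\in\mathbb{Z}}$ with $d(g(y_k),y_{k+1})\to0$ as $|k|\to\infty$ there is $y\in Y$ with $d(g^k(y),y_k)\to0$ as $|k|\to\infty$. Topologically mixing: for all nonempty open $U,V$ there is $N$ with $g^k(U)\cap V\ne\emptyset$ for all $k\ge N$. *)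

theory Defs
  imports "HOL-Analysis.Analysis"
begin

definition ipow :: "'a set \<Rightarrow> ('a \<Rightarrow> 'a) \<Rightarrow> int \<Rightarrow> 'a \<Rightarrow> 'a" where
  "ipow X f k x = (if k \<ge> 0 then (f ^^ nat k) x else (inv_into X f ^^ nat (- k)) x)"

definition tendsto0_both :: "(int \<Rightarrow> real) \<Rightarrow> bool" where
  "tendsto0_both a \<longleftrightarrow> (a \<longlongrightarrow> 0) at_top \<and> (a \<longlongrightarrow> 0) at_bot"

definition L_shadowing :: "'a::metric_space set \<Rightarrow> ('a \<Rightarrow> 'a) \<Rightarrow> bool" where
  "L_shadowing X f \<longleftrightarrow>
     (\<forall>\<epsilon>>0. \<exists>\<delta>>0. \<forall>x::int \<Rightarrow> 'a.
        (\<forall>k. x k \<in> X) \<and> (\<forall>k. dist (f (x k)) (x (k + 1)) \<le> \<delta>) \<and>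
        tendsto0_both (\<lambda>k. dist (f (x k)) (x (k + 1)))
        \<longrightarrow> (\<exists>z\<in>X. (\<forall>k. dist (ipow X f k z) (x k) \<le> \<epsilon>) \<and>
                    tendsto0_both (\<lambda>k. dist (ipow X f k z) (x k))))"

definition periodic_pseudo_orbit_through ::
  "'a::metric_space set \<Rightarrow> ('a \<Rightarrow> 'a) \<Rightarrow> real \<Rightarrow> 'a \<Rightarrow> 'a \<Rightarrow> bool" where
  "periodic_pseudo_orbit_through X f \<epsilon> x y \<longleftrightarrow>
     (\<exists>m::nat. \<exists>p::nat \<Rightarrow> 'a. m \<ge> 1 \<and> (\<forall>i. p i \<in> X) \<and> (\<forall>i. p (i + m) = p i) \<and>
        (\<forall>i. dist (f (p i)) (p (Suc i)) < \<epsilon>) \<and> x \<in> range p \<and> y \<in> range p)"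

definition chain_class :: "'a::metric_space set \<Rightarrow> ('a \<Rightarrow> 'a) \<Rightarrow> 'a \<Rightarrow> 'a set" where
  "chain_class X f x = {y \<in> X. \<forall>\<epsilon>>0. periodic_pseudo_orbit_through X f \<epsilon> x y}"

definition chain_recurrent_class :: "'a::metric_space set \<Rightarrow> ('a \<Rightarrow> 'a) \<Rightarrow> 'a set \<Rightarrow> bool" where
  "chain_recurrent_class X f C \<longleftrightarrow> (\<exists>x\<in>X. x \<in> chain_class X f x \<and> C = chain_class X f x)"

definition topologically_mixing :: "'a::metric_space set \<Rightarrow> ('a \<Rightarrow> 'a) \<Rightarrow> bool" where
  "topologically_mixing Y g \<longleftrightarrow>
     (\<forall>U V. openin (top_of_set Y) U \<and> openin (top_of_set Y) V \<and> U \<noteq> {} \<and> V \<noteq> {}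
        \<longrightarrow> (\<exists>N. \<forall>k\<ge>N. (g ^^ k) ` U \<inter> V \<noteq> {}))"

definition two_sided_limit_shadowing :: "'a::metric_space set \<Rightarrow> ('a \<Rightarrow> 'a) \<Rightarrow> bool" where
  "two_sided_limit_shadowing Y g \<longleftrightarrow>
     (\<forall>y::int \<Rightarrow> 'a. (\<forall>k. y k \<in> Y) \<and> tendsto0_both (\<lambda>k. dist (g (y k)) (y (k + 1)))
        \<longrightarrow> (\<exists>z\<in>Y. tendsto0_both (\<lambda>k. dist (ipow Y g k z) (y k))))"

end

theory Submission
  imports Defs
begin

text \<open>Fix a point x0 of C. For e > 0 the lengths of the e-chains from x0 back to x0 form an
  additive semigroup whose period p(e) divides all of them, so the lengths of the e-chains from x0
  to a point w of C are determined modulo p(e): this residue is the phase of w. Two nearby points of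
  C are joined by a pseudo orbit with a single small jump; its shadowing orbit is backward
  asymptotic to one of them and forward asymptotic to the other, so the phase is locally constant on
  C at a scale independent of e. By compactness p(e) is bounded, and as p(e) divides p(e') for
  e' \<le> e it is eventually constant, equal to n. The pieces C_i are the points of phase i: f raises
  the phase by one, and mixing and two-sided limit shadowing of the n-th power of f on C_i come from
  shadowing pseudo orbits glued from true orbits and e-chains inside C_i of length a multiple of n.\<close>

section \<open>Periods of additive semigroups of integers\<close>

lemma additive_semigroup_progression:
  fixes S :: "nat set"
  assumes add: "\<And>a b. a \<in> S \<Longrightarrow> b \<in> S \<Longrightarrow> a + b \<in> S"
    and "b \<in> S" "b + d \<in> S" "j \<le> Suc k"
  shows "Suc k * b + j * d \<in> S"
  using assms(4)
proof (induction k arbitrary: j)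
  case 0
  then have "j = 0 \<or> j = 1" by auto
  then show ?case using assms(2,3) by auto
next
  case (Suc k)
  show ?case
  proof (cases "j \<le> Suc k")
    case True
    then show ?thesis using add[OF Suc.IH[OF True] assms(2)] by (simp add: algebra_simps)
  next
    case False
    then have "j = Suc (Suc k)" using Suc.prems by simp
    then show ?thesis using add[OF Suc.IH[of "Suc k"] assms(3)] by (simp add: algebra_simps)
  qed
qed

lemma additive_semigroup_period:
  fixes S :: "nat set"
  assumes add: "\<And>a b. a \<in> S \<Longrightarrow> b \<in> S \<Longrightarrow> a + b \<in> S"
    and "s \<in> S" and pos: "\<And>a. a \<in> S \<Longrightarrow> 1 \<le> a"
  defines "d \<equiv> LEAST d. 0 < d \<and> (\<exists>a\<in>S. \<exists>b\<in>S. a = b + d)"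
  shows "0 < d" and "\<And>a. a \<in> S \<Longrightarrow> d dvd a" and "\<exists>N. \<forall>k\<ge>N. k * d \<in> S"
proof -
  let ?P = "\<lambda>d. 0 < d \<and> (\<exists>a\<in>S. \<exists>b\<in>S. a = b + d)"
  have "?P s" using assms(2) pos[OF assms(2)] add[OF assms(2) assms(2)] by auto
  then have "?P d" unfolding d_def by (rule LeastI)
  then obtain b where b: "b \<in> S" "b + d \<in> S" and d_pos: "0 < d" by blast
  show "0 < d" by (fact d_pos)
  have progression: "Suc k * b + j * d \<in> S" if "j \<le> Suc k" for k j
    using additive_semigroup_progression[OF add b that] .
  show dvd: "d dvd a" if a: "a \<in> S" for a
  proof (rule ccontr)
    assume "\<not> d dvd a"
    then have r: "0 < a mod d" "a mod d < d" using d_pos by (auto simp: dvd_eq_mod_eq_0)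
    have "Suc a * b + (a div d) * d \<in> S"
      by (rule progression) (meson div_le_dividend le_SucI)
    moreover have "a + Suc a * b \<in> S" using add[OF a progression[of 0 a]] by simp
    moreover have "a + Suc a * b = (Suc a * b + (a div d) * d) + a mod d"
      by (metis add.commute add.left_commute div_mult_mod_eq)
    ultimately have "?P (a mod d)" using r by metis
    then show False using not_less_Least[of "a mod d" ?P] r unfolding d_def by blast
  qed
  obtain \<beta> where \<beta>: "b = \<beta> * d" using dvd[OF b(1)] by (metis dvd_def mult.commute)
  have "1 \<le> \<beta>" using pos[OF b(1)] \<beta> by (cases \<beta>) auto
  have "k * d \<in> S" if k: "\<beta> * \<beta> \<le> k" for k
  proof -
    have "\<beta> \<le> k div \<beta>" using k \<open>1 \<le> \<beta>\<close>
      by (metis div_le_mono nonzero_mult_div_cancel_left not_one_le_zero)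
    moreover have "k mod \<beta> < \<beta>" using \<open>1 \<le> \<beta>\<close> by simp
    ultimately obtain k0 where k0: "k div \<beta> = Suc k0" "k mod \<beta> \<le> Suc k0"
      by (metis Suc_pred' \<open>1 \<le> \<beta>\<close> less_le_trans order.strict_implies_order zero_less_one)
    have "k * d = (k div \<beta>) * b + (k mod \<beta>) * d" unfolding \<beta>
      by (metis add_mult_distrib div_mult_mod_eq mult.assoc mult.commute)
    then show ?thesis using progression[OF k0(2)] k0(1) by simp
  qed
  then show "\<exists>N. \<forall>k\<ge>N. k * d \<in> S" by blast
qed

section \<open>Two-sided sequences and their jumps\<close>

lemma int_nat_or_neg_nat_cases:
  obtains k where "j = int k" | k where "j = - int k"
  by (metis nonneg_int_cases minus_minus neg_0_le_iff_le nle_le)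

lemma tendsto0_both_cong:
  assumes "tendsto0_both a" and "\<And>j. j \<le> M \<or> N \<le> j \<Longrightarrow> b j = a j"
  shows "tendsto0_both b"
proof -
  have "\<forall>\<^sub>F j in at_top. a j = b j"
    using eventually_ge_at_top[of N] by eventually_elim (simp add: assms(2))
  moreover have "\<forall>\<^sub>F j in at_bot. a j = b j"
    using eventually_le_at_bot[of M] by eventually_elim (simp add: assms(2))
  ultimately show ?thesis using assms(1) tendsto_cong unfolding tendsto0_both_def by blast
qed

lemma tendsto0_both_compose:
  assumes "tendsto0_both a" "filterlim h at_top at_top" "filterlim h at_bot at_bot"
  shows "tendsto0_both (\<lambda>k. a (h k))"
  using assms filterlim_compose unfolding tendsto0_both_def by blast

lemma filterlim_uminus_int_sequentially: "filterlim (\<lambda>k. - int k) at_bot sequentially"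
  unfolding filterlim_at_bot
proof
  fix Z :: int
  show "\<forall>\<^sub>F k in sequentially. - int k \<le> Z"
    by (rule eventually_mono[OF eventually_ge_at_top[of "nat (- Z)"]]) linarith
qed

lemma tendsto0_both_sequentially:
  assumes "tendsto0_both a"
  shows "(\<lambda>k. a (int k)) \<longlonglongrightarrow> 0" and "(\<lambda>k. a (- int k)) \<longlonglongrightarrow> 0"
  using assms filterlim_compose[OF _ filterlim_int_sequentially]
    filterlim_compose[OF _ filterlim_uminus_int_sequentially]
  unfolding tendsto0_both_def by blast+

lemma tendsto0_both_zero: "tendsto0_both (\<lambda>_. 0)"
  by (simp add: tendsto0_both_def)

lemma tendsto0_both_eventually_less:
  assumes "tendsto0_both a" "0 < e"
  obtains K where "0 \<le> K" and "\<And>k. K \<le> \<bar>k\<bar> \<Longrightarrow> a k < e"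
proof -
  have top: "(a \<longlongrightarrow> 0) at_top" and bot: "(a \<longlongrightarrow> 0) at_bot"
    using assms(1) unfolding tendsto0_both_def by auto
  obtain N1 where N1: "\<forall>k\<ge>N1. a k < e"
    using order_tendstoD(2)[OF top assms(2)] unfolding eventually_at_top_linorder by blast
  obtain N2 where N2: "\<forall>k\<le>N2. a k < e"
    using order_tendstoD(2)[OF bot assms(2)] unfolding eventually_at_bot_linorder by blast
  show ?thesis
  proof (rule that[of "max (max N1 (- N2)) 0"])
    fix k assume "max (max N1 (- N2)) 0 \<le> \<bar>k\<bar>"
    then consider "N1 \<le> k" | "k \<le> N2" by linarith
    then show "a k < e" using N1 N2 by cases auto
  qed simp
qed

lemma filterlim_int_mult_at_top: "0 < n \<Longrightarrow> filterlim (\<lambda>k. n * k :: int) at_top at_top"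
  unfolding filterlim_at_top
proof (intro allI)
  fix Z :: int assume "0 < n"
  have bound: "Z \<le> n * k" if "\<bar>Z\<bar> \<le> k" for k
  proof -
    have "1 * k \<le> n * k" using \<open>0 < n\<close> that by (intro mult_right_mono) auto
    then show ?thesis using that by linarith
  qed
  show "\<forall>\<^sub>F k in at_top. Z \<le> n * k"
    by (rule eventually_mono[OF eventually_ge_at_top[of "\<bar>Z\<bar>"] bound])
qed

lemma filterlim_int_mult_at_bot: "0 < n \<Longrightarrow> filterlim (\<lambda>k. n * k :: int) at_bot at_bot"
  unfolding filterlim_at_bot
proof (intro allI)
  fix Z :: int assume "0 < n"
  have bound: "n * k \<le> Z" if "k \<le> - \<bar>Z\<bar>" for k
  proof -
    have "n * k \<le> 1 * k" using \<open>0 < n\<close> that by (intro mult_right_mono_neg) auto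
    then show ?thesis using that by linarith
  qed
  show "\<forall>\<^sub>F k in at_bot. n * k \<le> Z"
    by (rule eventually_mono[OF eventually_le_at_bot[of "- \<bar>Z\<bar>"] bound])
qed

lemma filterlim_int_div_at_top: "0 < n \<Longrightarrow> filterlim (\<lambda>j. j div n :: int) at_top at_top"
  unfolding filterlim_at_top
proof (intro allI)
  fix Z :: int assume "0 < n"
  have bound: "Z \<le> j div n" if "Z * n \<le> j" for j
    using zdiv_mono1[OF that \<open>0 < n\<close>] \<open>0 < n\<close> by simp
  show "\<forall>\<^sub>F j in at_top. Z \<le> j div n"
    by (rule eventually_mono[OF eventually_ge_at_top[of "Z * n"] bound])
qed

lemma filterlim_int_div_at_bot: "0 < n \<Longrightarrow> filterlim (\<lambda>j. j div n :: int) at_bot at_bot"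
  unfolding filterlim_at_bot
proof (intro allI)
  fix Z :: int assume "0 < n"
  have bound: "j div n \<le> Z" if "j \<le> Z * n" for j
    using zdiv_mono1[OF that \<open>0 < n\<close>] \<open>0 < n\<close> by simp
  show "\<forall>\<^sub>F j in at_bot. j div n \<le> Z"
    by (rule eventually_mono[OF eventually_le_at_bot[of "Z * n"] bound])
qed

definition jump :: "('a::metric_space \<Rightarrow> 'a) \<Rightarrow> (int \<Rightarrow> 'a) \<Rightarrow> int \<Rightarrow> real" where
  "jump f x k = dist (f (x k)) (x (k + 1))"

definition splice_window :: "(int \<Rightarrow> 'a) \<Rightarrow> (nat \<Rightarrow> 'a) \<Rightarrow> int \<Rightarrow> nat \<Rightarrow> int \<Rightarrow> 'a" where
  "splice_window x q a L j = (if a \<le> j \<and> j \<le> a + int L then q (nat (j - a)) else x j)"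

lemma jump_splice_window:
  assumes "q 0 = x a" and "q L = x (a + int L)"
  shows "jump f (splice_window x q a L) j =
    (if a \<le> j \<and> j < a + int L then dist (f (q (nat (j - a)))) (q (Suc (nat (j - a)))) else jump f x j)"
proof -
  have outside: "splice_window x q a L i = x i" if "i \<le> a \<or> a + int L \<le> i" for i
    using that assms by (auto simp: splice_window_def)
  show ?thesis
  proof (cases "a \<le> j \<and> j < a + int L")
    case True
    then have "nat (j + 1 - a) = Suc (nat (j - a))" by linarith
    with True show ?thesis by (simp add: jump_def splice_window_def)
  next
    case False
    then have "j \<le> a \<or> a + int L \<le> j" "j + 1 \<le> a \<or> a + int L \<le> j + 1" by linarith+
    then have "jump f (splice_window x q a L) j = jump f x j" by (simp add: jump_def outside)
    with False show ?thesis by (simp only: if_False if_not_P)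
  qed
qed

text \<open>Fills the gaps of a pseudo orbit y of the n-th power of f with orbit segments of f.\<close>
definition interpolate :: "('a \<Rightarrow> 'a) \<Rightarrow> nat \<Rightarrow> (int \<Rightarrow> 'a) \<Rightarrow> int \<Rightarrow> 'a" where
  "interpolate f n y j = (f ^^ nat (j mod int n)) (y (j div int n))"

lemma interpolate_mult: "0 < n \<Longrightarrow> interpolate f n y (int n * k) = y k"
  by (simp add: interpolate_def)

lemma jump_interpolate:
  assumes "0 < n"
  shows "jump f (interpolate f n y) j =
    (if j mod int n = int n - 1 then jump (f ^^ n) y (j div int n) else 0)"
proof -
  define k m where "k = j div int n" and "m = nat (j mod int n)"
  have m: "m < n" using assms by (simp add: m_def nat_less_iff)
  have j: "j = int n * k + int m" using assms by (simp add: k_def m_def)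
  have at: "interpolate f n y (int n * k' + int r) = (f ^^ r) (y k')" if "r < n" for k' r
    using that by (simp add: interpolate_def add.commute)
  have j_at: "interpolate f n y j = (f ^^ m) (y k)" using at[OF m] j by simp
  have j_mod: "j mod int n = int m" "j div int n = k" using assms by (simp_all add: k_def m_def)
  show ?thesis
  proof (cases "Suc m < n")
    case True
    have "j + 1 = int n * k + int (Suc m)" using j by simp
    then have "interpolate f n y (j + 1) = f ((f ^^ m) (y k))" using at[OF True] by (simp only:) simp
    then show ?thesis using True j_at j_mod by (simp add: jump_def)
  next
    case False
    then have "Suc m = n" using m by simp
    then have "j + 1 = int n * (k + 1) + int 0" using j by (simp add: algebra_simps)
    then have "interpolate f n y (j + 1) = y (k + 1)" using at[of 0 "k + 1"] assms by (simp only:) simp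
    moreover have "f ((f ^^ m) (y k)) = (f ^^ n) (y k)" using \<open>Suc m = n\<close> by (metis comp_apply funpow.simps(2))
    ultimately show ?thesis using \<open>Suc m = n\<close> j_at j_mod by (simp add: jump_def)
  qed
qed

lemma tendsto0_both_jump_interpolate:
  assumes "0 < n" and "tendsto0_both (jump (f ^^ n) y)"
  shows "tendsto0_both (jump f (interpolate f n y))"
proof -
  let ?E = "\<lambda>j. jump (f ^^ n) y (j div int n)"
  have E: "tendsto0_both ?E"
    using tendsto0_both_compose[OF assms(2)] filterlim_int_div_at_top filterlim_int_div_at_bot assms(1)
    by simp
  have bounds: "0 \<le> jump f (interpolate f n y) j" "jump f (interpolate f n y) j \<le> ?E j" for j
    unfolding jump_interpolate[OF assms(1)] by (auto simp: jump_def)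
  have "(jump f (interpolate f n y) \<longlongrightarrow> 0) F" if "(?E \<longlongrightarrow> 0) F" for F
    by (rule tendsto_sandwich[OF _ _ tendsto_const that]) (simp_all add: bounds)
  then show ?thesis using E unfolding tendsto0_both_def by blast
qed

lemma jump_splice_interpolate_less:
  fixes f :: "'a::metric_space \<Rightarrow> 'a"
  assumes n: "0 < n" and "0 < e"
    and q: "\<And>j. j < n * M \<Longrightarrow> dist (f (q j)) (q (Suc j)) < e" "q 0 = y A" "q (n * M) = y (A + int M)"
    and y: "\<And>k. k < A \<or> A + int M \<le> k \<Longrightarrow> jump (f ^^ n) y k < e"
  shows "jump f (splice_window (interpolate f n y) q (int n * A) (n * M)) j < e"
proof -
  have window_end: "int n * A + int (n * M) = int n * (A + int M)" by (simp add: algebra_simps)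
  have "q 0 = interpolate f n y (int n * A)" "q (n * M) = interpolate f n y (int n * A + int (n * M))"
    using q(2,3) window_end by (simp_all add: interpolate_mult[OF n])
  note jump = jump_splice_window[OF this, of f j]
  show ?thesis
  proof (cases "int n * A \<le> j \<and> j < int n * A + int (n * M)")
    case True
    then have "nat (j - int n * A) < n * M" by linarith
    then show ?thesis using True q(1) unfolding jump by simp
  next
    case False
    have "j div int n < A \<or> A + int M \<le> j div int n"
    proof (cases "j < int n * A")
      case True
      have "j div int n * int n \<le> j"
        using div_mult_mod_eq[of j "int n"] pos_mod_sign[of "int n" j] n by linarith
      then have "int n * (j div int n) < int n * A" using True by (simp add: mult.commute)
      then show ?thesis using n by simp
    next
      case False
      then have "int n * (A + int M) \<le> j"
        using \<open>\<not> (int n * A \<le> j \<and> j < int n * A + int (n * M))\<close> window_end by linarith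
      then show ?thesis using zdiv_mono1[of "int n * (A + int M)" j "int n"] n by simp
    qed
    then show ?thesis
      using y[of "j div int n"] \<open>0 < e\<close> unfolding jump if_not_P[OF False] jump_interpolate[OF n] by simp
  qed
qed

lemma tendsto0_both_jump_splice_interpolate:
  assumes n: "0 < n" and "tendsto0_both (jump (f ^^ n) y)"
    and "q 0 = y A" "q (n * M) = y (A + int M)"
  shows "tendsto0_both (jump f (splice_window (interpolate f n y) q (int n * A) (n * M)))"
proof -
  have "int n * A + int (n * M) = int n * (A + int M)" by (simp add: algebra_simps)
  then have "q 0 = interpolate f n y (int n * A)" "q (n * M) = interpolate f n y (int n * A + int (n * M))"
    using assms(3,4) by (simp_all add: interpolate_mult[OF n])
  note jump = jump_splice_window[OF this, of f]
  show ?thesis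
    by (rule tendsto0_both_cong[OF tendsto0_both_jump_interpolate[OF n assms(2)],
          of "int n * A - 1" "int n * A + int (n * M)"]) (auto simp: jump)
qed

lemma splice_interpolate_mult:
  assumes "0 < n" "k < A \<or> A + int M < k"
  shows "splice_window (interpolate f n y) q (int n * A) (n * M) (int n * k) = y k"
proof -
  have "int n * A + int (n * M) = int n * (A + int M)" by (simp add: algebra_simps)
  moreover have "int n * k < int n * A \<or> int n * (A + int M) < int n * k"
    using assms by simp
  ultimately have outside: "\<not> (int n * A \<le> int n * k \<and> int n * k \<le> int n * A + int (n * M))"
    by linarith
  show ?thesis unfolding splice_window_def if_not_P[OF outside] by (rule interpolate_mult[OF assms(1)])
qed

section \<open>Pseudo orbits of a homeomorphism of a compact space\<close>

lemma compact_separated_card_bound: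
  fixes X :: "'a::metric_space set"
  assumes "compact X" and "0 < r"
  shows "\<exists>N. \<forall>S\<subseteq>X. (\<forall>x\<in>S. \<forall>y\<in>S. x \<noteq> y \<longrightarrow> r \<le> dist x y) \<longrightarrow> finite S \<and> card S \<le> N"
proof -
  have "X \<subseteq> (\<Union>c\<in>X. ball c (r / 2))" using assms(2) by auto
  from compactE_image[OF assms(1) open_ball this]
  obtain F where F: "F \<subseteq> X" "finite F" "X \<subseteq> (\<Union>c\<in>F. ball c (r / 2))" .
  have "finite S \<and> card S \<le> card F"
    if S: "S \<subseteq> X" and sep: "\<forall>x\<in>S. \<forall>y\<in>S. x \<noteq> y \<longrightarrow> r \<le> dist x y" for S
  proof -
    define centre where "centre x = (SOME c. c \<in> F \<and> x \<in> ball c (r / 2))" for x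
    have centre: "centre x \<in> F \<and> dist (centre x) x < r / 2" if "x \<in> S" for x
    proof -
      have "\<exists>c. c \<in> F \<and> x \<in> ball c (r / 2)" using F(3) S that by blast
      then show ?thesis unfolding centre_def mem_ball by (rule someI_ex)
    qed
    have "inj_on centre S"
    proof (rule inj_onI)
      fix x y assume "x \<in> S" "y \<in> S" "centre x = centre y"
      then have "dist x y < r"
        using centre[OF \<open>x \<in> S\<close>] centre[OF \<open>y \<in> S\<close>]
          dist_triangle_half_r[of "centre x" x r y] by simp
      then show "x = y" using sep \<open>x \<in> S\<close> \<open>y \<in> S\<close> by fastforce
    qed
    moreover have "centre ` S \<subseteq> F" using centre by blast
    ultimately show ?thesis using F(2) card_inj_on_le inj_on_finite by blast
  qed
  then show ?thesis by blast
qed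

locale compact_homeomorphism =
  fixes X :: "'a::metric_space set" and f g :: "'a \<Rightarrow> 'a"
  assumes compact_space: "compact X" and homeomorphism: "homeomorphism X X f g"
begin

lemma f_in: "x \<in> X \<Longrightarrow> f x \<in> X"
  and g_in: "x \<in> X \<Longrightarrow> g x \<in> X"
  and g_f: "x \<in> X \<Longrightarrow> g (f x) = x"
  and f_g: "x \<in> X \<Longrightarrow> f (g x) = x"
  using homeomorphism unfolding homeomorphism_def by blast+

lemma funpow_in: "x \<in> X \<Longrightarrow> (f ^^ k) x \<in> X"
  by (induction k) (auto simp: f_in)

lemma funpow_g_in: "x \<in> X \<Longrightarrow> (g ^^ k) x \<in> X"
  by (induction k) (auto simp: g_in)

lemma funpow_f_g: "x \<in> X \<Longrightarrow> (f ^^ k) ((g ^^ k) x) = x"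
proof (induction k)
  case (Suc k)
  then show ?case by (simp only: funpow_Suc_right[where f = f] funpow.simps(2)[where f = g]
    comp_apply f_g funpow_g_in)
qed simp

lemma funpow_g_f: "x \<in> X \<Longrightarrow> (g ^^ k) ((f ^^ k) x) = x"
proof (induction k)
  case (Suc k)
  then show ?case by (simp only: funpow_Suc_right[where f = g] funpow.simps(2)[where f = f]
    comp_apply g_f funpow_in)
qed simp

lemma inv_into_eq: "x \<in> X \<Longrightarrow> inv_into X f x = g x"
  by (metis g_f f_g g_in inj_on_inverseI inv_into_f_eq)

lemma ipow_nat: "ipow X f (int k) x = (f ^^ k) x"
  by (simp add: ipow_def)

lemma ipow_neg_nat:
  assumes "x \<in> X" shows "ipow X f (- int k) x = (g ^^ k) x"
proof -
  have "(inv_into X f ^^ k) x = (g ^^ k) x"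
    by (induction k) (simp_all add: assms inv_into_eq funpow_g_in)
  then show ?thesis by (simp add: ipow_def)
qed

lemma ipow_in: "x \<in> X \<Longrightarrow> ipow X f j x \<in> X"
  by (cases j rule: int_nat_or_neg_nat_cases) (simp_all add: ipow_nat ipow_neg_nat funpow_in funpow_g_in)

lemma f_ipow:
  assumes "x \<in> X" shows "f (ipow X f j x) = ipow X f (j + 1) x"
proof (cases j rule: int_nat_or_neg_nat_cases)
  case (1 k)
  then show ?thesis using ipow_nat[of "Suc k"] by (simp add: ipow_nat add.commute)
next
  case (2 k)
  show ?thesis
  proof (cases k)
    case (Suc k')
    have "f (ipow X f j x) = f (g ((g ^^ k') x))"
      by (simp only: 2 Suc ipow_neg_nat[OF assms] funpow.simps(2) comp_apply)
    also have "\<dots> = ipow X f (- int k') x" using ipow_neg_nat[OF assms] f_g funpow_g_in assms by simp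
    finally show ?thesis using 2 Suc by simp
  qed (use 2 in \<open>simp add: ipow_def\<close>)
qed

lemma uniformly_continuous_f:
  "0 < e \<Longrightarrow> \<exists>d>0. \<forall>a\<in>X. \<forall>b\<in>X. dist a b < d \<longrightarrow> dist (f a) (f b) < e"
  using compact_uniformly_continuous[OF _ compact_space] homeomorphism
  unfolding homeomorphism_def uniformly_continuous_on_def by (metis dist_commute)

lemma uniformly_continuous_g:
  "0 < e \<Longrightarrow> \<exists>d>0. \<forall>a\<in>X. \<forall>b\<in>X. dist a b < d \<longrightarrow> dist (g a) (g b) < e"
  using compact_uniformly_continuous[OF _ compact_space] homeomorphism
  unfolding homeomorphism_def uniformly_continuous_on_def by (metis dist_commute)

definition pseudo_orbit_segment :: "real \<Rightarrow> (nat \<Rightarrow> 'a) \<Rightarrow> nat \<Rightarrow> bool" where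
  "pseudo_orbit_segment e q L \<longleftrightarrow> (\<forall>j\<le>L. q j \<in> X) \<and> (\<forall>j<L. dist (f (q j)) (q (Suc j)) < e)"

definition eps_chain :: "real \<Rightarrow> 'a \<Rightarrow> 'a \<Rightarrow> nat \<Rightarrow> bool" where
  "eps_chain e a b L \<longleftrightarrow> (\<exists>q. pseudo_orbit_segment e q L \<and> q 0 = a \<and> q L = b)"

lemma pseudo_orbit_segment_append:
  assumes "pseudo_orbit_segment e q L" "pseudo_orbit_segment e p M" "q L = p 0"
  shows "pseudo_orbit_segment e (\<lambda>j. if j \<le> L then q j else p (j - L)) (L + M)"
  unfolding pseudo_orbit_segment_def
proof (intro conjI allI impI)
  fix j
  show "j \<le> L + M \<Longrightarrow> (if j \<le> L then q j else p (j - L)) \<in> X"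
    using assms(1,2) unfolding pseudo_orbit_segment_def by auto
  assume "j < L + M"
  then consider "j < L" | "L \<le> j" "Suc j - L = Suc (j - L)" "j - L < M" by linarith
  then show "dist (f (if j \<le> L then q j else p (j - L))) (if Suc j \<le> L then q (Suc j) else p (Suc j - L)) < e"
  proof cases
    case 1 then show ?thesis using assms(1) unfolding pseudo_orbit_segment_def by auto
  next
    case 2 then show ?thesis using assms unfolding pseudo_orbit_segment_def
      by (cases "j = L") auto
  qed
qed

lemma eps_chain_refl: "a \<in> X \<Longrightarrow> eps_chain e a a 0"
  unfolding eps_chain_def pseudo_orbit_segment_def by (rule exI[of _ "\<lambda>_. a"]) auto

lemma eps_chain_single: "a \<in> X \<Longrightarrow> c \<in> X \<Longrightarrow> dist (f a) c < e \<Longrightarrow> eps_chain e a c 1"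
  unfolding eps_chain_def pseudo_orbit_segment_def
  by (rule exI[of _ "\<lambda>j. if j = 0 then a else c"]) auto

lemma eps_chain_mono:
  assumes "eps_chain e a b L" "e \<le> e'" shows "eps_chain e' a b L"
proof -
  obtain q where q: "pseudo_orbit_segment e q L" "q 0 = a" "q L = b"
    using assms(1) unfolding eps_chain_def by blast
  have "pseudo_orbit_segment e' q L"
    using q(1) assms(2) unfolding pseudo_orbit_segment_def by (meson less_le_trans)
  then show ?thesis using q(2,3) unfolding eps_chain_def by blast
qed

lemma eps_chain_trans:
  assumes "eps_chain e a b L" "eps_chain e b c M" shows "eps_chain e a c (L + M)"
proof -
  obtain q where q: "pseudo_orbit_segment e q L" "q 0 = a" "q L = b"
    using assms(1) unfolding eps_chain_def by blast
  obtain p where p: "pseudo_orbit_segment e p M" "p 0 = b" "p M = c"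
    using assms(2) unfolding eps_chain_def by blast
  have "pseudo_orbit_segment e (\<lambda>j. if j \<le> L then q j else p (j - L)) (L + M)"
    using pseudo_orbit_segment_append q(1,3) p(1,2) by simp
  then show ?thesis unfolding eps_chain_def using q(2,3) p(2,3)
    by (intro exI[of _ "\<lambda>j. if j \<le> L then q j else p (j - L)"]) auto
qed

lemma eps_chain_orbit: "a \<in> X \<Longrightarrow> 0 < e \<Longrightarrow> eps_chain e a ((f ^^ k) a) k"
proof (induction k)
  case (Suc k)
  then show ?case
    using eps_chain_trans[OF _ eps_chain_single[OF funpow_in funpow_in[of _ "Suc k"]]] by simp
qed (simp add: eps_chain_refl)

lemma eps_chain_drop_first:
  assumes "eps_chain e a b L" "1 \<le> L"
  shows "\<exists>c\<in>X. dist (f a) c < e \<and> eps_chain e c b (L - 1)"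
proof -
  obtain q where q: "pseudo_orbit_segment e q L" "q 0 = a" "q L = b"
    using assms(1) unfolding eps_chain_def by blast
  have "eps_chain e (q 1) b (L - 1)"
    unfolding eps_chain_def pseudo_orbit_segment_def
    by (rule exI[of _ "\<lambda>j. q (Suc j)"]) (use q assms(2) in \<open>auto simp: pseudo_orbit_segment_def\<close>)
  moreover have "q 1 \<in> X" "dist (f a) (q 1) < e"
    using q assms(2) unfolding pseudo_orbit_segment_def by auto
  ultimately show ?thesis by blast
qed

lemma eps_chain_drop_last:
  assumes "eps_chain e a b L" "1 \<le> L"
  shows "\<exists>c\<in>X. dist (f c) b < e \<and> eps_chain e a c (L - 1)"
proof -
  obtain q where q: "pseudo_orbit_segment e q L" "q 0 = a" "q L = b"
    using assms(1) unfolding eps_chain_def by blast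
  have "Suc (L - 1) = L" using assms(2) by simp
  then have "dist (f (q (L - 1))) b < e" using q unfolding pseudo_orbit_segment_def
    by (metis diff_less less_numeral_extra(1) assms(2) le_less_trans less_one not_le)
  moreover have "eps_chain e a (q (L - 1)) (L - 1)"
    unfolding eps_chain_def pseudo_orbit_segment_def
    by (rule exI[of _ q]) (use q in \<open>auto simp: pseudo_orbit_segment_def\<close>)
  moreover have "q (L - 1) \<in> X" using q(1) unfolding pseudo_orbit_segment_def by simp
  ultimately show ?thesis by blast
qed

lemma eps_chain_perturb_end:
  assumes "eps_chain e a b L" "1 \<le> L" "b' \<in> X" "dist b b' < e'"
  shows "eps_chain (e + e') a b' L"
proof -
  obtain c where c: "c \<in> X" "dist (f c) b < e" "eps_chain e a c (L - 1)"
    using eps_chain_drop_last[OF assms(1,2)] by blast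
  have "dist (f c) b' < e + e'" using dist_triangle[of "f c" b' b] c(2) assms(4) by linarith
  then have "eps_chain (e + e') c b' 1" using eps_chain_single c(1) assms(3) by blast
  moreover have "eps_chain (e + e') a c (L - 1)"
    using eps_chain_mono[OF c(3), of "e + e'"] assms(4) zero_le_dist[of b b'] by linarith
  ultimately show ?thesis using eps_chain_trans assms(2) by fastforce
qed

lemma eps_chain_perturb_start:
  assumes "eps_chain e a b L" "1 \<le> L" "a' \<in> X" "dist (f a') (f a) < e'"
  shows "eps_chain (e + e') a' b L"
proof -
  obtain c where c: "c \<in> X" "dist (f a) c < e" "eps_chain e c b (L - 1)"
    using eps_chain_drop_first[OF assms(1,2)] by blast
  have "dist (f a') c < e + e'" using dist_triangle[of "f a'" c "f a"] c(2) assms(4) by linarith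
  then have "eps_chain (e + e') a' c 1" using eps_chain_single c(1) assms(3) by blast
  moreover have "eps_chain (e + e') c b (L - 1)"
    using eps_chain_mono[OF c(3), of "e + e'"] assms(4) zero_le_dist[of "f a'" "f a"] by linarith
  ultimately show ?thesis using eps_chain_trans assms(2) by fastforce
qed

lemma periodic_pseudo_orbit_eps_chain:
  assumes "periodic_pseudo_orbit_through X f e x y"
  shows "\<exists>L. eps_chain e x y L" and "\<exists>m\<ge>1. eps_chain e x x m"
proof -
  obtain m p where p: "1 \<le> m" "\<forall>i. p i \<in> X" "\<forall>i. p (i + m) = p i"
    "\<forall>i. dist (f (p i)) (p (Suc i)) < e" "x \<in> range p" "y \<in> range p"
    using assms unfolding periodic_pseudo_orbit_through_def by blast
  obtain s t where st: "x = p s" "y = p t" using p(5,6) by blast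
  have periodic: "p (i + k * m) = p i" for i k
  proof (induction k)
    case (Suc k)
    have "i + Suc k * m = (i + k * m) + m" by simp
    then show ?case using p(3) Suc.IH by metis
  qed simp
  have segment: "eps_chain e x (p (s + L)) L" for L
    unfolding eps_chain_def pseudo_orbit_segment_def
    by (rule exI[of _ "\<lambda>j. p (s + j)"]) (use p(2,4) st in auto)
  have "s + (s * m + t - s) = t + s * m" using p(1) by (simp add: le_add2 trans_le_add1)
  then show "\<exists>L. eps_chain e x y L" using segment[of "s * m + t - s"] periodic st by metis
  show "\<exists>m\<ge>1. eps_chain e x x m" using segment[of m] periodic[of s 1] p(1) st by (auto simp: add.commute)
qed

lemma periodic_pseudo_orbit_of_segment:
  assumes "pseudo_orbit_segment e r m" "1 \<le> m" "r m = r 0" "t \<le> m"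
  shows "periodic_pseudo_orbit_through X f e (r 0) (r t)"
proof -
  define p where "p i = r (i mod m)" for i
  have "dist (f (p i)) (p (Suc i)) < e" for i
  proof -
    have "i mod m < m" using assms(2) by simp
    moreover have "p (Suc i) = r (Suc (i mod m))"
      using assms(3) by (cases "Suc (i mod m) = m") (auto simp: p_def mod_Suc)
    ultimately show ?thesis using assms(1) unfolding pseudo_orbit_segment_def p_def by simp
  qed
  moreover have "r t \<in> range p"
    using assms(3,4) by (cases "t = m") (auto simp: p_def intro: range_eqI[of _ _ 0] range_eqI[of _ _ t])
  moreover have "r 0 \<in> range p" by (auto simp: p_def intro: range_eqI[of _ _ 0])
  moreover have "p i \<in> X" "p (i + m) = p i" for i
    using assms(1,2) unfolding p_def pseudo_orbit_segment_def by simp_all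
  ultimately show ?thesis unfolding periodic_pseudo_orbit_through_def using assms(2) by blast
qed

lemma periodic_pseudo_orbit_of_eps_chains:
  assumes "eps_chain e x y a" "eps_chain e y x b" "1 \<le> a + b"
  shows "periodic_pseudo_orbit_through X f e x y"
proof -
  obtain q where q: "pseudo_orbit_segment e q a" "q 0 = x" "q a = y"
    using assms(1) unfolding eps_chain_def by blast
  obtain p where p: "pseudo_orbit_segment e p b" "p 0 = y" "p b = x"
    using assms(2) unfolding eps_chain_def by blast
  define r where "r j = (if j \<le> a then q j else p (j - a))" for j
  have "pseudo_orbit_segment e r (a + b)"
    unfolding r_def using pseudo_orbit_segment_append q(1,3) p(1,2) by simp
  moreover have "r 0 = x" "r a = y" "r (a + b) = x" using q p by (auto simp: r_def)
  ultimately show ?thesis using periodic_pseudo_orbit_of_segment[of e r "a + b" a] assms(3) by simp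
qed

definition orbit_pair :: "'a \<Rightarrow> 'a \<Rightarrow> nat \<Rightarrow> int \<Rightarrow> 'a" where
  "orbit_pair u v L j = (if j < int L then ipow X f j u else ipow X f (j - int L) v)"

lemma jump_orbit_pair:
  assumes "u \<in> X" "v \<in> X" "j + 1 < int L \<or> int L \<le> j"
  shows "jump f (orbit_pair u v L) j = 0"
  using assms f_ipow[OF assms(1), of j] f_ipow[OF assms(2), of "j - int L"]
  by (auto simp: jump_def orbit_pair_def algebra_simps)

definition extend_by_orbits :: "(nat \<Rightarrow> 'a) \<Rightarrow> nat \<Rightarrow> int \<Rightarrow> 'a" where
  "extend_by_orbits q L = splice_window (orbit_pair (q 0) (q L) L) q 0 L"

lemma extend_by_orbits_outside:
  "j < 0 \<or> int L < j \<Longrightarrow> extend_by_orbits q L j = orbit_pair (q 0) (q L) L j"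
  by (auto simp: extend_by_orbits_def splice_window_def)

lemma extend_by_orbits_segment: "j \<le> L \<Longrightarrow> extend_by_orbits q L (int j) = q j"
  by (simp add: extend_by_orbits_def splice_window_def)

lemma extend_by_orbits_backward:
  "1 \<le> L \<Longrightarrow> q 0 \<in> X \<Longrightarrow> extend_by_orbits q L (- int k) = (g ^^ k) (q 0)"
  using ipow_neg_nat[of "q 0" k]
  by (cases k) (auto simp: extend_by_orbits_def splice_window_def orbit_pair_def)

lemma extend_by_orbits_forward: "extend_by_orbits q L (int (k + L)) = (f ^^ k) (q L)"
proof (cases "k = 0")
  case False
  then have "extend_by_orbits q L (int (k + L)) = ipow X f (int k) (q L)"
    using extend_by_orbits_outside[of "int (k + L)"] by (simp add: orbit_pair_def)
  then show ?thesis by (simp only: ipow_nat)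
qed (simp add: extend_by_orbits_def splice_window_def)

lemma extend_by_orbits_pseudo_orbit:
  assumes q: "pseudo_orbit_segment \<delta> q L" and L: "1 \<le> L"
  shows "\<forall>j. extend_by_orbits q L j \<in> X" and "\<forall>j. jump f (extend_by_orbits q L) j \<le> \<delta>"
    and "tendsto0_both (jump f (extend_by_orbits q L))"
proof -
  let ?x = "extend_by_orbits q L"
  have ends: "q 0 \<in> X" "q L \<in> X" using q unfolding pseudo_orbit_segment_def by auto
  show "\<forall>j. ?x j \<in> X"
    using q ipow_in ends
    by (auto simp: extend_by_orbits_def splice_window_def orbit_pair_def pseudo_orbit_segment_def)
  have "q 0 = orbit_pair (q 0) (q L) L 0" "q L = orbit_pair (q 0) (q L) L (0 + int L)"
    using L by (simp_all add: orbit_pair_def ipow_def)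
  from jump_splice_window[OF this]
  have jump: "jump f ?x j = (if 0 \<le> j \<and> j < int L then dist (f (q (nat j))) (q (Suc (nat j))) else 0)" for j
    using jump_orbit_pair[OF ends, of j L] L unfolding extend_by_orbits_def by auto
  show "\<forall>j. jump f ?x j \<le> \<delta>"
  proof
    fix j
    show "jump f ?x j \<le> \<delta>"
    proof (cases "0 \<le> j \<and> j < int L")
      case True
      then have "nat j < L" by linarith
      then show ?thesis using True q unfolding jump pseudo_orbit_segment_def by (simp add: less_imp_le)
    next
      case False
      have "dist (f (q 0)) (q 1) < \<delta>" using q L unfolding pseudo_orbit_segment_def by auto
      then have "0 < \<delta>" using zero_le_dist[of "f (q 0)" "q 1"] by linarith
      then show ?thesis using False by (simp only: jump if_False if_not_P)
    qed
  qed
  show "tendsto0_both (jump f ?x)"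
    by (rule tendsto0_both_cong[OF tendsto0_both_zero, of "-1" "int L"]) (auto simp: jump)
qed

end

section \<open>Periods and phases in a chain recurrent class\<close>

locale chain_recurrent_point = compact_homeomorphism +
  fixes x0 :: 'a
  assumes chain_recurrent: "x0 \<in> chain_class X f x0"
begin

abbreviation C :: "'a set" where "C \<equiv> chain_class X f x0"

lemma class_subset: "C \<subseteq> X"
  unfolding chain_class_def by blast

lemma base_in: "x0 \<in> X"
  using chain_recurrent class_subset by blast

lemma mem_class_iff:
  "w \<in> C \<longleftrightarrow> w \<in> X \<and> (\<forall>e>0. (\<exists>a. eps_chain e x0 w a) \<and> (\<exists>b. eps_chain e w x0 b))"
proof
  assume w: "w \<in> C"
  have "periodic_pseudo_orbit_through X f e w x0" if "periodic_pseudo_orbit_through X f e x0 w" for e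
    using that unfolding periodic_pseudo_orbit_through_def by blast
  then show "w \<in> X \<and> (\<forall>e>0. (\<exists>a. eps_chain e x0 w a) \<and> (\<exists>b. eps_chain e w x0 b))"
    using w periodic_pseudo_orbit_eps_chain(1) unfolding chain_class_def by blast
next
  assume w: "w \<in> X \<and> (\<forall>e>0. (\<exists>a. eps_chain e x0 w a) \<and> (\<exists>b. eps_chain e w x0 b))"
  have "periodic_pseudo_orbit_through X f e x0 w" if "0 < e" for e
  proof -
    obtain a b where ab: "eps_chain e x0 w a" "eps_chain e w x0 b" using w \<open>0 < e\<close> by blast
    show ?thesis
    proof (cases "a + b = 0")
      case True
      then have "w = x0" using ab(1) unfolding eps_chain_def by auto
      then show ?thesis using chain_recurrent \<open>0 < e\<close> unfolding chain_class_def by blast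
    qed (use periodic_pseudo_orbit_of_eps_chains[OF ab] in auto)
  qed
  then show "w \<in> C" using w unfolding chain_class_def by blast
qed

lemma base_cycle: "0 < e \<Longrightarrow> \<exists>m\<ge>1. eps_chain e x0 x0 m"
  using chain_recurrent periodic_pseudo_orbit_eps_chain(2) unfolding chain_class_def by blast

lemma base_cycle_long:
  assumes "0 < e" shows "\<exists>m\<ge>N. eps_chain e x0 x0 m"
proof -
  obtain m where m: "1 \<le> m" "eps_chain e x0 x0 m" using base_cycle[OF assms] by blast
  have "eps_chain e x0 x0 (k * m)" for k
    by (induction k) (simp_all add: eps_chain_refl base_in eps_chain_trans[OF m(2)])
  moreover have "N \<le> N * m" using m(1) by simp
  ultimately show ?thesis by blast
qed

lemma eps_chain_to_class:
  assumes "w \<in> C" "0 < e" shows "\<exists>a\<ge>N. eps_chain e x0 w a"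
proof -
  obtain m where "N \<le> m" "eps_chain e x0 x0 m" using base_cycle_long[OF assms(2)] by blast
  moreover obtain a where "eps_chain e x0 w a" using assms mem_class_iff by blast
  ultimately show ?thesis using eps_chain_trans by (metis trans_le_add1)
qed

lemma eps_chain_from_class:
  assumes "w \<in> C" "0 < e" shows "\<exists>b\<ge>N. eps_chain e w x0 b"
proof -
  obtain m where "N \<le> m" "eps_chain e x0 x0 m" using base_cycle_long[OF assms(2)] by blast
  moreover obtain b where "eps_chain e w x0 b" using assms mem_class_iff by blast
  ultimately show ?thesis using eps_chain_trans by (metis trans_le_add2)
qed

lemma class_f:
  assumes "w \<in> C" shows "f w \<in> C"
proof -
  have w: "w \<in> X" using assms class_subset by blast
  have "(\<exists>a. eps_chain e x0 (f w) a) \<and> (\<exists>b. eps_chain e (f w) x0 b)" if "0 < e" for e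
  proof
    obtain a where "eps_chain e x0 w a" using eps_chain_to_class[OF assms \<open>0 < e\<close>] by blast
    then show "\<exists>a. eps_chain e x0 (f w) a"
      using eps_chain_trans eps_chain_single[OF w f_in[OF w]] \<open>0 < e\<close> by fastforce
  next
    obtain \<delta> where \<delta>: "0 < \<delta>" "\<forall>a\<in>X. \<forall>b\<in>X. dist a b < \<delta> \<longrightarrow> dist (f a) (f b) < e / 2"
      using uniformly_continuous_f[of "e / 2"] \<open>0 < e\<close> by auto
    define d where "d = min \<delta> (e / 2)"
    have d: "0 < d" "d \<le> \<delta>" "d \<le> e / 2" using \<delta> \<open>0 < e\<close> by (auto simp: d_def)
    obtain b where b: "2 \<le> b" "eps_chain d w x0 b" using eps_chain_from_class[OF assms d(1)] by blast
    then obtain c where c: "c \<in> X" "dist (f w) c < d" "eps_chain d c x0 (b - 1)"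
      using eps_chain_drop_first[OF b(2)] by auto
    have "dist (f (f w)) (f c) < e / 2" using \<delta> c d f_in w by auto
    then have "eps_chain (d + e / 2) (f w) x0 (b - 1)"
      using eps_chain_perturb_start[OF c(3) _ f_in[OF w]] b(1) by simp
    then show "\<exists>b. eps_chain e (f w) x0 b" using eps_chain_mono d(3) by (metis add_le_cancel_right field_sum_of_halves)
  qed
  then show ?thesis using mem_class_iff f_in w by blast
qed

lemma class_g:
  assumes "w \<in> C" shows "g w \<in> C"
proof -
  have w: "w \<in> X" using assms class_subset by blast
  have "(\<exists>a. eps_chain e x0 (g w) a) \<and> (\<exists>b. eps_chain e (g w) x0 b)" if "0 < e" for e
  proof
    obtain \<delta> where \<delta>: "0 < \<delta>" "\<forall>a\<in>X. \<forall>b\<in>X. dist a b < \<delta> \<longrightarrow> dist (g a) (g b) < e / 2"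
      using uniformly_continuous_g[of "e / 2"] \<open>0 < e\<close> by auto
    define d where "d = min \<delta> (e / 2)"
    have d: "0 < d" "d \<le> \<delta>" "d \<le> e / 2" using \<delta> \<open>0 < e\<close> by (auto simp: d_def)
    obtain a where a: "2 \<le> a" "eps_chain d x0 w a" using eps_chain_to_class[OF assms d(1)] by blast
    then obtain c where c: "c \<in> X" "dist (f c) w < d" "eps_chain d x0 c (a - 1)"
      using eps_chain_drop_last[OF a(2)] by auto
    have "dist (g (f c)) (g w) < e / 2" using \<delta> c d f_in w by auto
    then have "eps_chain (d + e / 2) x0 (g w) (a - 1)"
      using eps_chain_perturb_end[OF c(3) _ g_in[OF w]] a(1) g_f[OF c(1)] by simp
    then show "\<exists>a. eps_chain e x0 (g w) a" using eps_chain_mono d(3) by (metis add_le_cancel_right field_sum_of_halves)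
  next
    obtain b where "eps_chain e w x0 b" using eps_chain_from_class[OF assms \<open>0 < e\<close>] by blast
    then show "\<exists>b. eps_chain e (g w) x0 b"
      using eps_chain_trans eps_chain_single[OF g_in[OF w] w] f_g[OF w] \<open>0 < e\<close> by fastforce
  qed
  then show ?thesis using mem_class_iff g_in w by blast
qed

lemma class_funpow: "w \<in> C \<Longrightarrow> (f ^^ k) w \<in> C"
  by (induction k) (auto simp: class_f)

lemma class_funpow_g: "w \<in> C \<Longrightarrow> (g ^^ k) w \<in> C"
  by (induction k) (auto simp: class_g)

lemma class_ipow: "w \<in> C \<Longrightarrow> ipow X f j w \<in> C"
  using class_subset
  by (cases j rule: int_nat_or_neg_nat_cases) (auto simp: ipow_nat ipow_neg_nat class_funpow class_funpow_g)

lemma eps_chain_to_near_class: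
  assumes "w \<in> C" "z \<in> X" "0 < e" "dist w z < e / 2"
  shows "\<exists>a. eps_chain e x0 z a"
proof -
  obtain a where a: "1 \<le> a" "eps_chain (e / 2) x0 w a"
    using eps_chain_to_class[OF assms(1) half_gt_zero[OF assms(3)], where N = 1] by auto
  have "eps_chain (e / 2 + e / 2) x0 z a"
    using eps_chain_perturb_end[OF a(2,1) assms(2) assms(4)] .
  then show ?thesis by auto
qed

lemma eps_chain_from_near_class:
  assumes "0 < e"
  obtains d where "0 < d" and "\<And>z w. w \<in> C \<Longrightarrow> z \<in> X \<Longrightarrow> dist z w < d \<Longrightarrow> \<exists>b. eps_chain e z x0 b"
proof -
  obtain \<delta> where \<delta>: "0 < \<delta>" "\<forall>a\<in>X. \<forall>b\<in>X. dist a b < \<delta> \<longrightarrow> dist (f a) (f b) < e / 2"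
    using uniformly_continuous_f[of "e / 2"] assms by auto
  define d where "d = min \<delta> (e / 2)"
  have d: "0 < d" "d \<le> \<delta>" "d \<le> e / 2" using \<delta> assms by (auto simp: d_def)
  have "\<exists>b. eps_chain e z x0 b" if w: "w \<in> C" and z: "z \<in> X" and "dist z w < d" for z w
  proof -
    obtain b where b: "1 \<le> b" "eps_chain d w x0 b" using eps_chain_from_class[OF w d(1)] by blast
    have "dist (f z) (f w) < e / 2" using \<delta>(2) w z \<open>dist z w < d\<close> d(2) class_subset by auto
    then have "eps_chain (d + e / 2) z x0 b" using eps_chain_perturb_start[OF b(2,1) z] by simp
    then show ?thesis using eps_chain_mono d(3) by (metis add_le_cancel_right field_sum_of_halves)
  qed
  with d(1) that show ?thesis by blast
qed

lemma class_closed: "closed C"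
proof -
  have "w \<in> C" if w: "w \<in> closure C" for w
  proof -
    have "w \<in> X"
      using w closure_minimal[OF class_subset compact_imp_closed[OF compact_space]] by blast
    moreover have "(\<exists>a. eps_chain e x0 w a) \<and> (\<exists>b. eps_chain e w x0 b)" if "0 < e" for e
    proof -
      obtain d where "0 < d" and from_near: "\<And>z w. w \<in> C \<Longrightarrow> z \<in> X \<Longrightarrow> dist z w < d \<Longrightarrow> \<exists>b. eps_chain e z x0 b"
        using eps_chain_from_near_class[OF \<open>0 < e\<close>] by blast
      obtain y where y: "y \<in> C" "dist y w < min d (e / 2)"
        using w \<open>0 < d\<close> \<open>0 < e\<close> unfolding closure_approachable by (metis half_gt_zero min_less_iff_conj)
      show ?thesis
        using eps_chain_to_near_class[OF y(1) \<open>w \<in> X\<close> \<open>0 < e\<close>] from_near[OF y(1) \<open>w \<in> X\<close>] y(2)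
        by (simp add: dist_commute)
    qed
    ultimately show ?thesis using mem_class_iff by blast
  qed
  then show ?thesis using closure_subset_eq by blast
qed

lemma mem_class_if_asymptotic:
  assumes z: "z \<in> X" and x: "\<And>j. J \<le> \<bar>j\<bar> \<Longrightarrow> x j \<in> C"
    and asymptotic: "tendsto0_both (\<lambda>j. dist (ipow X f j z) (x j))"
  shows "z \<in> C"
proof -
  have asymptotic_top: "((\<lambda>j. dist (ipow X f j z) (x j)) \<longlongrightarrow> 0) at_top"
    and asymptotic_bot: "((\<lambda>j. dist (ipow X f j z) (x j)) \<longlongrightarrow> 0) at_bot"
    using asymptotic unfolding tendsto0_both_def by auto
  have "(\<exists>a. eps_chain e x0 z a) \<and> (\<exists>b. eps_chain e z x0 b)" if "0 < e" for e
  proof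
    obtain N where N: "\<forall>j\<le>N. dist (ipow X f j z) (x j) < e / 2"
      using order_tendstoD(2)[OF asymptotic_bot, of "e / 2"] \<open>0 < e\<close>
      unfolding eventually_at_bot_linorder by auto
    define k where "k = nat (- min N (- \<bar>J\<bar>))"
    have k: "- int k \<le> N" "J \<le> \<bar>- int k\<bar>" by (auto simp: k_def)
    have "dist (x (- int k)) ((g ^^ k) z) < e / 2"
      using N[rule_format, OF k(1)] ipow_neg_nat[OF z, of k] by (metis dist_commute)
    then obtain a where "eps_chain e x0 ((g ^^ k) z) a"
      using eps_chain_to_near_class[OF x[OF k(2)] funpow_g_in[OF z] \<open>0 < e\<close>] by blast
    moreover have "eps_chain e ((g ^^ k) z) z k"
      using eps_chain_orbit[OF funpow_g_in[OF z] \<open>0 < e\<close>, of k k] by (simp add: funpow_f_g[OF z])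
    ultimately show "\<exists>a. eps_chain e x0 z a" using eps_chain_trans by blast
  next
    obtain d where "0 < d" and from_near: "\<And>z w. w \<in> C \<Longrightarrow> z \<in> X \<Longrightarrow> dist z w < d \<Longrightarrow> \<exists>b. eps_chain e z x0 b"
      using eps_chain_from_near_class[OF \<open>0 < e\<close>] by blast
    obtain N where N: "\<forall>j\<ge>N. dist (ipow X f j z) (x j) < d"
      using order_tendstoD(2)[OF asymptotic_top \<open>0 < d\<close>] unfolding eventually_at_top_linorder by auto
    define k where "k = nat (max N \<bar>J\<bar>)"
    have k: "N \<le> int k" "J \<le> \<bar>int k\<bar>" by (auto simp: k_def)
    have "dist ((f ^^ k) z) (x (int k)) < d" using N[rule_format, OF k(1)] by (simp only: ipow_nat)
    then obtain b where "eps_chain e ((f ^^ k) z) x0 b"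
      using from_near[OF x[OF k(2)] funpow_in[OF z]] by blast
    then show "\<exists>b. eps_chain e z x0 b"
      using eps_chain_trans[OF eps_chain_orbit[OF z \<open>0 < e\<close>]] by blast
  qed
  then show ?thesis using mem_class_iff z by blast
qed

lemma extend_by_orbits_in_class:
  assumes "q 0 \<in> C" "q L \<in> C" "int L + 1 \<le> \<bar>j\<bar>"
  shows "extend_by_orbits q L j \<in> C"
proof -
  have "j < 0 \<or> int L < j" using assms(3) by linarith
  then show ?thesis using extend_by_orbits_outside class_ipow assms(1,2) by (simp add: orbit_pair_def)
qed

definition cycle_lengths :: "real \<Rightarrow> nat set" where
  "cycle_lengths e = {m. 1 \<le> m \<and> eps_chain e x0 x0 m}"

definition period :: "real \<Rightarrow> nat" where
  "period e = (LEAST d. 0 < d \<and> (\<exists>a\<in>cycle_lengths e. \<exists>b\<in>cycle_lengths e. a = b + d))"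

lemma
  assumes "0 < e"
  shows period_pos: "0 < period e"
    and period_dvd_cycle: "eps_chain e x0 x0 m \<Longrightarrow> period e dvd m"
    and period_multiple_cycles: "\<exists>N. \<forall>k\<ge>N. eps_chain e x0 x0 (k * period e)"
proof -
  obtain s where s: "s \<in> cycle_lengths e" using base_cycle[OF assms] by (auto simp: cycle_lengths_def)
  have add: "a + b \<in> cycle_lengths e" if "a \<in> cycle_lengths e" "b \<in> cycle_lengths e" for a b
    using that eps_chain_trans by (auto simp: cycle_lengths_def)
  have pos: "1 \<le> a" if "a \<in> cycle_lengths e" for a using that by (simp add: cycle_lengths_def)
  note semigroup = additive_semigroup_period[OF add s pos, folded period_def]
  show "0 < period e" using semigroup(1) by blast
  show "period e dvd m" if "eps_chain e x0 x0 m"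
    using semigroup(2) that by (cases "m = 0") (auto simp: cycle_lengths_def)
  show "\<exists>N. \<forall>k\<ge>N. eps_chain e x0 x0 (k * period e)"
    using semigroup(3) by (auto simp: cycle_lengths_def)
qed

lemma eps_chain_length_mod_period:
  assumes "0 < e" "w \<in> C" "eps_chain e x0 w a" "eps_chain e x0 w b"
  shows "a mod period e = b mod period e"
proof -
  obtain c where c: "eps_chain e w x0 c" using eps_chain_from_class[OF assms(2,1)] by blast
  have "period e dvd a + c" "period e dvd b + c"
    using period_dvd_cycle[OF assms(1)] eps_chain_trans[OF assms(3) c] eps_chain_trans[OF assms(4) c]
    by auto
  then have "(a + c) mod period e = (b + c) mod period e" by simp
  then show ?thesis by (simp add: nat_mod_eq_iff)
qed

lemma period_dvd_period:
  assumes "0 < e'" "e' \<le> e" shows "period e dvd period e'"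
proof -
  obtain N where N: "\<And>k. N \<le> k \<Longrightarrow> eps_chain e' x0 x0 (k * period e')"
    using period_multiple_cycles[OF assms(1)] by blast
  have multiple: "period e dvd k * period e'" if "N \<le> k" for k
    using period_dvd_cycle[OF _ eps_chain_mono[OF N[OF that] assms(2)]] assms(1,2) by simp
  have "period e dvd Suc N * period e' - N * period e'"
    by (rule dvd_diff_nat[OF multiple multiple]) simp_all
  then show ?thesis by simp
qed

text \<open>By eps_chain_length_mod_period, the choice of the chain is irrelevant.\<close>
definition phase :: "real \<Rightarrow> 'a \<Rightarrow> nat" where
  "phase e w = (SOME a. eps_chain e x0 w a) mod period e"

lemma phase_eq:
  assumes "w \<in> C" "0 < e" "eps_chain e x0 w a" shows "phase e w = a mod period e"
proof -
  have "eps_chain e x0 w (SOME a. eps_chain e x0 w a)" using assms(3) by (rule someI)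
  from eps_chain_length_mod_period[OF assms(2,1) this assms(3)] show ?thesis
    by (simp only: phase_def)
qed

lemma phase_less:
  assumes "0 < e" shows "phase e w < period e"
  using period_pos[OF assms] unfolding phase_def by (rule mod_less_divisor)

lemma phase_funpow:
  assumes "w \<in> C" "0 < e" shows "phase e ((f ^^ k) w) = (phase e w + k) mod period e"
proof -
  obtain a where a: "eps_chain e x0 w a" using eps_chain_to_class[OF assms] by blast
  have "w \<in> X" using assms(1) class_subset by blast
  have "phase e ((f ^^ k) w) = (a + k) mod period e"
    by (rule phase_eq[OF class_funpow[OF assms(1)] assms(2) eps_chain_trans[OF a eps_chain_orbit]])
      (use \<open>w \<in> X\<close> assms(2) in auto)
  then show ?thesis using phase_eq[OF assms a] by (simp add: mod_add_left_eq)
qed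

lemma phase_funpow_cancel:
  assumes "z \<in> C" "w \<in> C" "0 < e" "phase e ((f ^^ k) z) = phase e ((f ^^ k) w)"
  shows "phase e z = phase e w"
proof -
  have "(phase e z + k) mod period e = (phase e w + k) mod period e"
    using assms(4) unfolding phase_funpow[OF assms(1,3)] phase_funpow[OF assms(2,3)] .
  then have "phase e z mod period e = phase e w mod period e" by (simp add: nat_mod_eq_iff)
  then show ?thesis by (simp only: mod_less[OF phase_less[OF assms(3)]])
qed

lemma phase_eq_if_close:
  assumes "z \<in> C" "w \<in> C" "0 < e" "dist z w < e / 2"
  shows "phase e z = phase e w"
proof -
  obtain a where a: "1 \<le> a" "eps_chain (e / 2) x0 z a"
    using eps_chain_to_class[OF assms(1) half_gt_zero[OF assms(3)], where N = 1] by auto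
  have "eps_chain (e / 2 + e / 2) x0 w a"
    using eps_chain_perturb_end[OF a(2,1), of w "e / 2"] assms(2,4) class_subset by auto
  then have "phase e w = a mod period e" using phase_eq[OF assms(2,3)] by simp
  moreover have "phase e z = a mod period e"
    using phase_eq[OF assms(1,3)] eps_chain_mono[OF a(2)] assms(3) by simp
  ultimately show ?thesis by simp
qed

lemma phase_base_orbit: "0 < e \<Longrightarrow> phase e ((f ^^ i) x0) = i mod period e"
  by (rule phase_eq[OF class_funpow[OF chain_recurrent] _ eps_chain_orbit[OF base_in]])

lemma phase_eq_if_backward_asymptotic:
  assumes "z \<in> C" "u \<in> C" "0 < e" and asymptotic: "(\<lambda>k. dist ((g ^^ k) z) ((g ^^ k) u)) \<longlonglongrightarrow> 0"
  shows "phase e z = phase e u"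
proof -
  obtain k where k: "dist ((g ^^ k) z) ((g ^^ k) u) < e / 2"
    using order_tendstoD(2)[OF asymptotic, of "e / 2"] assms(3) unfolding eventually_sequentially by auto
  have "phase e ((g ^^ k) z) = phase e ((g ^^ k) u)"
    using phase_eq_if_close[OF class_funpow_g class_funpow_g assms(3) k] assms(1,2) .
  then have "phase e ((f ^^ k) ((g ^^ k) z)) = phase e ((f ^^ k) ((g ^^ k) u))"
    using phase_funpow[OF class_funpow_g[OF assms(1)] assms(3)] phase_funpow[OF class_funpow_g[OF assms(2)] assms(3)]
    by (simp only:)
  moreover have "z \<in> X" "u \<in> X" using assms(1,2) class_subset by auto
  ultimately show ?thesis by (simp add: funpow_f_g)
qed

lemma phase_eq_if_forward_asymptotic:
  assumes "z \<in> C" "y \<in> C" "0 < e" and asymptotic: "(\<lambda>k. dist ((f ^^ k) z) ((f ^^ k) y)) \<longlonglongrightarrow> 0"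
  shows "phase e z = phase e y"
proof -
  obtain k where k: "dist ((f ^^ k) z) ((f ^^ k) y) < e / 2"
    using order_tendstoD(2)[OF asymptotic, of "e / 2"] assms(3) unfolding eventually_sequentially by auto
  show ?thesis
    using phase_funpow_cancel[OF assms(1,2,3) phase_eq_if_close[OF class_funpow class_funpow assms(3) k]]
      assms(1,2) .
qed

end

section \<open>The cyclic decomposition of a class under L-shadowing\<close>

locale L_shadowing_chain_class = chain_recurrent_point +
  assumes L_shadowing: "L_shadowing X f"
begin

lemma L_shadowingE:
  assumes "0 < \<eta>"
  obtains \<delta> where "0 < \<delta>" and "\<And>x. (\<forall>k. x k \<in> X) \<Longrightarrow> (\<forall>k. jump f x k \<le> \<delta>) \<Longrightarrow>
    tendsto0_both (jump f x) \<Longrightarrow> \<exists>z\<in>X. (\<forall>k. dist (ipow X f k z) (x k) \<le> \<eta>) \<and>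
      tendsto0_both (\<lambda>k. dist (ipow X f k z) (x k))"
proof -
  obtain \<delta> where "0 < \<delta>" and shadow: "\<forall>x. (\<forall>k. x k \<in> X) \<and> (\<forall>k. jump f x k \<le> \<delta>) \<and>
    tendsto0_both (jump f x) \<longrightarrow> (\<exists>z\<in>X. (\<forall>k. dist (ipow X f k z) (x k) \<le> \<eta>) \<and>
      tendsto0_both (\<lambda>k. dist (ipow X f k z) (x k)))"
    using L_shadowing[unfolded L_shadowing_def, rule_format, OF assms]
    unfolding jump_def[abs_def] by blast
  show ?thesis by (rule that[OF \<open>0 < \<delta>\<close>]) (use shadow in blast)
qed

lemma shadow_eps_chain:
  assumes "0 < \<eta>"
  obtains \<delta> where "0 < \<delta>" and "\<And>u v L. u \<in> C \<Longrightarrow> v \<in> C \<Longrightarrow> 1 \<le> L \<Longrightarrow> eps_chain \<delta> u v L \<Longrightarrow>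
    \<exists>z\<in>C. dist z u \<le> \<eta> \<and> dist ((f ^^ L) z) v \<le> \<eta> \<and>
      (\<lambda>k. dist ((g ^^ k) z) ((g ^^ k) u)) \<longlonglongrightarrow> 0 \<and>
      (\<lambda>k. dist ((f ^^ k) ((f ^^ L) z)) ((f ^^ k) v)) \<longlonglongrightarrow> 0"
proof -
  obtain \<delta> where \<delta>: "0 < \<delta>" and shadow: "\<And>x. (\<forall>k. x k \<in> X) \<Longrightarrow> (\<forall>k. jump f x k \<le> \<delta>) \<Longrightarrow>
    tendsto0_both (jump f x) \<Longrightarrow> \<exists>z\<in>X. (\<forall>k. dist (ipow X f k z) (x k) \<le> \<eta>) \<and>
      tendsto0_both (\<lambda>k. dist (ipow X f k z) (x k))"
    using L_shadowingE[OF assms] by blast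
  have "\<exists>z\<in>C. dist z u \<le> \<eta> \<and> dist ((f ^^ L) z) v \<le> \<eta> \<and>
      (\<lambda>k. dist ((g ^^ k) z) ((g ^^ k) u)) \<longlonglongrightarrow> 0 \<and>
      (\<lambda>k. dist ((f ^^ k) ((f ^^ L) z)) ((f ^^ k) v)) \<longlonglongrightarrow> 0"
    if u: "u \<in> C" and v: "v \<in> C" and L: "1 \<le> L" and chain: "eps_chain \<delta> u v L" for u v L
  proof -
    obtain q where q: "pseudo_orbit_segment \<delta> q L" "q 0 = u" "q L = v"
      using chain unfolding eps_chain_def by blast
    let ?x = "extend_by_orbits q L"
    obtain z where z: "z \<in> X" "\<And>j. dist (ipow X f j z) (?x j) \<le> \<eta>"
      and asymptotic: "tendsto0_both (\<lambda>j. dist (ipow X f j z) (?x j))"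
      using shadow extend_by_orbits_pseudo_orbit[OF q(1) L] by blast
    have "z \<in> C"
      using mem_class_if_asymptotic[OF z(1) extend_by_orbits_in_class asymptotic] u v q(2,3) by simp
    moreover have "dist z u \<le> \<eta>"
      using z(2)[of 0] extend_by_orbits_segment[of 0 L q] q(2) ipow_nat[of 0 z] by simp
    moreover have "dist ((f ^^ L) z) v \<le> \<eta>"
      using z(2)[of "int L"] extend_by_orbits_segment[of L L q] q(3) ipow_nat[of L z] by simp
    moreover have "(\<lambda>k. dist ((g ^^ k) z) ((g ^^ k) u)) \<longlonglongrightarrow> 0"
    proof -
      have "?x (- int k) = (g ^^ k) u" for k
        using extend_by_orbits_backward[OF L, of q k] q(2) u class_subset by auto
      moreover have "ipow X f (- int k) z = (g ^^ k) z" for k by (rule ipow_neg_nat[OF z(1)])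
      ultimately show ?thesis using tendsto0_both_sequentially(2)[OF asymptotic] by simp
    qed
    moreover have "(\<lambda>k. dist ((f ^^ k) ((f ^^ L) z)) ((f ^^ k) v)) \<longlonglongrightarrow> 0"
    proof -
      have "?x (int (k + L)) = (f ^^ k) v" for k
        using extend_by_orbits_forward[of q L k] q(3) by simp
      moreover have "ipow X f (int (k + L)) z = (f ^^ k) ((f ^^ L) z)" for k
        by (simp only: ipow_nat funpow_add comp_apply)
      ultimately show ?thesis
        using LIMSEQ_ignore_initial_segment[OF tendsto0_both_sequentially(1)[OF asymptotic], of L] by simp
    qed
    ultimately show ?thesis by blast
  qed
  with \<delta> that show ?thesis by blast
qed

text \<open>Two close points of C are joined by a one-step pseudo orbit, whose shadowing orbit is
  backward asymptotic to one of them and forward asymptotic to the other.\<close>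
lemma phase_locally_constant:
  obtains r where "0 < r" and "\<And>u y e. u \<in> C \<Longrightarrow> y \<in> C \<Longrightarrow> dist u y < r \<Longrightarrow> 0 < e \<Longrightarrow> phase e u = phase e y"
proof -
  obtain \<delta> where "0 < \<delta>" and shadow: "\<And>u v L. u \<in> C \<Longrightarrow> v \<in> C \<Longrightarrow> 1 \<le> L \<Longrightarrow> eps_chain \<delta> u v L \<Longrightarrow>
    \<exists>z\<in>C. dist z u \<le> 1 \<and> dist ((f ^^ L) z) v \<le> 1 \<and>
      (\<lambda>k. dist ((g ^^ k) z) ((g ^^ k) u)) \<longlonglongrightarrow> 0 \<and>
      (\<lambda>k. dist ((f ^^ k) ((f ^^ L) z)) ((f ^^ k) v)) \<longlonglongrightarrow> 0"
    using shadow_eps_chain[of 1] by auto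
  obtain r where "0 < r" and r: "\<forall>a\<in>X. \<forall>b\<in>X. dist a b < r \<longrightarrow> dist (f a) (f b) < \<delta>"
    using uniformly_continuous_f[OF \<open>0 < \<delta>\<close>] by auto
  have "phase e u = phase e y" if u: "u \<in> C" and y: "y \<in> C" and "dist u y < r" and "0 < e" for u y e
  proof -
    have "eps_chain \<delta> u (f y) 1"
      using eps_chain_single r \<open>dist u y < r\<close> u y class_subset f_in by blast
    then obtain z where z: "z \<in> C"
      and backward: "(\<lambda>k. dist ((g ^^ k) z) ((g ^^ k) u)) \<longlonglongrightarrow> 0"
      and forward: "(\<lambda>k. dist ((f ^^ k) (f z)) ((f ^^ k) (f y))) \<longlonglongrightarrow> 0"
      using shadow[OF u class_f[OF y] order_refl] by auto
    have "phase e z = phase e u" by (rule phase_eq_if_backward_asymptotic[OF z u \<open>0 < e\<close> backward])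
    moreover have "phase e (f z) = phase e (f y)"
      by (rule phase_eq_if_forward_asymptotic[OF class_f[OF z] class_f[OF y] \<open>0 < e\<close> forward])
    then have "phase e z = phase e y" using phase_funpow_cancel[OF z y \<open>0 < e\<close>, of 1] by simp
    ultimately show ?thesis by simp
  qed
  with \<open>0 < r\<close> that show ?thesis by blast
qed

text \<open>The points of the orbit of x0 before time period e have pairwise different phases, so they
  are separated by the radius of local constancy of the phase; compactness bounds their number.\<close>
lemma period_bounded:
  obtains M where "\<And>e. 0 < e \<Longrightarrow> period e \<le> M"
proof -
  obtain r where "0 < r" and r: "\<And>u y e. u \<in> C \<Longrightarrow> y \<in> C \<Longrightarrow> dist u y < r \<Longrightarrow> 0 < e \<Longrightarrow> phase e u = phase e y"
    using phase_locally_constant by blast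
  obtain M where M: "\<forall>S\<subseteq>X. (\<forall>x\<in>S. \<forall>y\<in>S. x \<noteq> y \<longrightarrow> r \<le> dist x y) \<longrightarrow> finite S \<and> card S \<le> M"
    using compact_separated_card_bound[OF compact_space \<open>0 < r\<close>] by blast
  have "period e \<le> M" if "0 < e" for e
  proof -
    let ?orbit = "\<lambda>i. (f ^^ i) x0"
    have separated: "r \<le> dist (?orbit i) (?orbit j)" if "i < period e" "j < period e" "i \<noteq> j" for i j
    proof (rule ccontr)
      assume "\<not> r \<le> dist (?orbit i) (?orbit j)"
      then have "phase e (?orbit i) = phase e (?orbit j)"
        using r class_funpow[OF chain_recurrent] \<open>0 < e\<close> by simp
      then show False using that phase_base_orbit[OF \<open>0 < e\<close>] by simp
    qed
    have "inj_on ?orbit {..<period e}"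
    proof (rule inj_onI)
      fix i j assume "i \<in> {..<period e}" "j \<in> {..<period e}" "?orbit i = ?orbit j"
      then show "i = j" using separated[of i j] \<open>0 < r\<close> by (cases "i = j") auto
    qed
    moreover have "card (?orbit ` {..<period e}) \<le> M"
    proof -
      have "\<forall>x\<in>?orbit ` {..<period e}. \<forall>y\<in>?orbit ` {..<period e}. x \<noteq> y \<longrightarrow> r \<le> dist x y"
        using separated by fastforce
      moreover have "?orbit ` {..<period e} \<subseteq> X" using funpow_in[OF base_in] by blast
      ultimately show ?thesis using M by blast
    qed
    ultimately show ?thesis by (simp add: card_image)
  qed
  with that show ?thesis by blast
qed

definition class_period :: nat where
  "class_period = Max (period ` {e. 0 < e})"

definition period_scale :: real where
  "period_scale = (SOME e. 0 < e \<and> period e = class_period)"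

lemma finite_periods: "finite (period ` {e. 0 < e})"
proof -
  obtain M where "\<And>e. 0 < e \<Longrightarrow> period e \<le> M" using period_bounded by blast
  then have "period ` {e. 0 < e} \<subseteq> {..M}" by auto
  then show ?thesis using finite_subset by blast
qed

lemma period_scale: "0 < period_scale" "period period_scale = class_period"
proof -
  have "class_period \<in> period ` {e. 0 < e}"
    unfolding class_period_def by (rule Max_in[OF finite_periods]) (auto intro: exI[of _ 1])
  then have "\<exists>e. 0 < e \<and> period e = class_period" by auto
  then have "0 < period_scale \<and> period period_scale = class_period"
    unfolding period_scale_def by (rule someI_ex)
  then show "0 < period_scale" "period period_scale = class_period" by auto
qed

text \<open>Periods only grow, by divisibility, as e decreases, and they are bounded; so they are
  eventually constant.\<close>
lemma period_eq_class_period: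
  assumes "0 < e" "e \<le> period_scale" shows "period e = class_period"
proof -
  have "class_period dvd period e" using period_dvd_period[OF assms] period_scale by simp
  moreover have "period e \<le> class_period"
    unfolding class_period_def using finite_periods assms(1) by (simp add: Max_ge)
  ultimately show ?thesis using period_pos[OF assms(1)] by (simp add: dvd_imp_le le_antisym)
qed

lemma class_period_pos: "0 < class_period"
  using period_pos period_scale by metis

lemma phase_eq_phase_scale:
  assumes "w \<in> C" "0 < e" "e \<le> period_scale" shows "phase e w = phase period_scale w"
proof -
  obtain a where a: "eps_chain e x0 w a" using eps_chain_to_class[OF assms(1,2)] by blast
  then have "eps_chain period_scale x0 w a" using eps_chain_mono assms(3) by blast
  then show ?thesis
    using phase_eq[OF assms(1,2) a] phase_eq[OF assms(1) period_scale(1)] period_scale(2)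
      period_eq_class_period[OF assms(2,3)] by simp
qed

definition piece :: "nat \<Rightarrow> 'a set" where
  "piece i = {w \<in> C. phase period_scale w = i}"

lemma piece_subset: "piece i \<subseteq> C"
  unfolding piece_def by blast

lemma phase_piece: "w \<in> piece i \<Longrightarrow> 0 < e \<Longrightarrow> e \<le> period_scale \<Longrightarrow> phase e w = i"
  using phase_eq_phase_scale unfolding piece_def by blast

lemma piece_index_less: "w \<in> piece i \<Longrightarrow> i < class_period"
  using phase_less[OF period_scale(1)] period_scale(2) unfolding piece_def by auto

lemma pieces_disjoint: "i \<noteq> j \<Longrightarrow> piece i \<inter> piece j = {}"
  unfolding piece_def by blast

lemma class_eq_Union_pieces: "C = (\<Union>i<class_period. piece i)"
  using phase_less[OF period_scale(1)] period_scale(2) unfolding piece_def by auto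

lemma funpow_piece:
  assumes "w \<in> piece i" shows "(f ^^ k) w \<in> piece ((i + k) mod class_period)"
  using assms phase_funpow[OF _ period_scale(1)] period_scale(2) class_funpow
  unfolding piece_def by auto

lemma image_piece:
  assumes "i < class_period" shows "f ` piece i = piece (Suc i mod class_period)"
proof
  show "f ` piece i \<subseteq> piece (Suc i mod class_period)"
    using funpow_piece[of _ i 1] by auto
  show "piece (Suc i mod class_period) \<subseteq> f ` piece i"
  proof
    fix w assume w: "w \<in> piece (Suc i mod class_period)"
    then have "w \<in> C" using piece_subset by blast
    define j where "j = phase period_scale (g w)"
    have "g w \<in> piece j" using class_g[OF \<open>w \<in> C\<close>] by (simp add: piece_def j_def)
    moreover have "f (g w) = w" using f_g \<open>w \<in> C\<close> class_subset by blast
    ultimately have "w \<in> piece (Suc j mod class_period)" using funpow_piece[of "g w" j 1] by simp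
    then have "Suc j mod class_period = Suc i mod class_period" using w pieces_disjoint by blast
    then have "(j + 1) mod class_period = (i + 1) mod class_period" by simp
    then have "j mod class_period = i mod class_period" by (simp add: nat_mod_eq_iff)
    then have "j = i" using piece_index_less[OF \<open>g w \<in> piece j\<close>] assms by simp
    then show "w \<in> f ` piece i"
      using \<open>g w \<in> piece j\<close> \<open>f (g w) = w\<close> by (intro image_eqI[where x = "g w"]) simp_all
  qed
qed

lemma funpow_period_image_piece:
  assumes "i < class_period" shows "(f ^^ class_period) ` piece i = piece i"
proof
  show "(f ^^ class_period) ` piece i \<subseteq> piece i"
    using funpow_piece[of _ i class_period] assms by auto
  show "piece i \<subseteq> (f ^^ class_period) ` piece i"
  proof
    fix w assume w: "w \<in> piece i"
    then have "w \<in> C" using piece_subset by blast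
    define j where "j = phase period_scale ((g ^^ class_period) w)"
    have "(g ^^ class_period) w \<in> piece j"
      using class_funpow_g[OF \<open>w \<in> C\<close>] by (simp add: piece_def j_def)
    moreover have "(f ^^ class_period) ((g ^^ class_period) w) = w"
      using funpow_f_g \<open>w \<in> C\<close> class_subset by blast
    ultimately have "w \<in> piece ((j + class_period) mod class_period)"
      using funpow_piece[of _ j class_period] by metis
    then have "w \<in> piece j" using piece_index_less[OF \<open>(g ^^ class_period) w \<in> piece j\<close>] by simp
    then have "j = i" using w pieces_disjoint by blast
    then show "w \<in> (f ^^ class_period) ` piece i"
      using \<open>(g ^^ class_period) w \<in> piece j\<close> \<open>(f ^^ class_period) ((g ^^ class_period) w) = w\<close>
      by (intro image_eqI[where x = "(g ^^ class_period) w"]) simp_all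
  qed
qed

lemma piece_locally_closed_in_class:
  obtains r where "0 < r" and "\<And>u y i. u \<in> piece i \<Longrightarrow> y \<in> C \<Longrightarrow> dist u y < r \<Longrightarrow> y \<in> piece i"
proof -
  obtain r where "0 < r" and r: "\<And>u y e. u \<in> C \<Longrightarrow> y \<in> C \<Longrightarrow> dist u y < r \<Longrightarrow> 0 < e \<Longrightarrow> phase e u = phase e y"
    using phase_locally_constant by blast
  have "y \<in> piece i" if u: "u \<in> piece i" and y: "y \<in> C" and "dist u y < r" for u y i
  proof -
    have "u \<in> C" using u piece_subset by blast
    then have "phase period_scale u = phase period_scale y"
      using r y \<open>dist u y < r\<close> period_scale(1) by blast
    then show ?thesis using u y unfolding piece_def by simp
  qed
  then show ?thesis by (rule that[OF \<open>0 < r\<close>])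
qed

lemma piece_closed: "closed (piece i)"
proof -
  obtain r where "0 < r" and r: "\<And>u y i. u \<in> piece i \<Longrightarrow> y \<in> C \<Longrightarrow> dist u y < r \<Longrightarrow> y \<in> piece i"
    using piece_locally_closed_in_class by blast
  have "w \<in> piece i" if w: "w \<in> closure (piece i)" for w
  proof -
    have "w \<in> C" using w closure_minimal[OF piece_subset class_closed] by blast
    moreover obtain u where "u \<in> piece i" "dist u w < r"
      using w \<open>0 < r\<close> unfolding closure_approachable by blast
    ultimately show ?thesis using r by blast
  qed
  then show ?thesis using closure_subset_eq by blast
qed

lemma piece_compact: "compact (piece i)"
proof -
  have "piece i \<subseteq> X" using piece_subset class_subset by blast
  then show ?thesis using closed_Int_compact[OF piece_closed compact_space, of i] by (simp add: Int_absorb2)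
qed

lemma eps_chain_within_piece:
  assumes "u \<in> piece i" "v \<in> piece i" "0 < e" "e \<le> period_scale"
  shows "\<exists>N. \<forall>k\<ge>N. eps_chain e u v (class_period * k)"
proof -
  have u: "u \<in> C" and v: "v \<in> C" using assms(1,2) piece_subset by auto
  obtain d where d: "eps_chain e u x0 d" using eps_chain_from_class[OF u assms(3)] by blast
  obtain a where a: "eps_chain e x0 u a" using eps_chain_to_class[OF u assms(3)] by blast
  obtain b where b: "eps_chain e x0 v b" using eps_chain_to_class[OF v assms(3)] by blast
  have period: "period e = class_period" using period_eq_class_period[OF assms(3,4)] .
  have "a mod class_period = b mod class_period"
    using phase_eq[OF u assms(3) a] phase_eq[OF v assms(3) b] phase_piece[OF assms(1,3,4)]
      phase_piece[OF assms(2,3,4)] period by simp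
  moreover have "(a + d) mod class_period = 0"
    using period_dvd_cycle[OF assms(3) eps_chain_trans[OF a d]] period by simp
  ultimately have "(d + b) mod class_period = 0" by (metis add.commute mod_add_left_eq)
  then obtain l where l: "d + b = class_period * l" by (metis mod_eq_0_iff_dvd dvdE)
  obtain N where N: "\<And>k. N \<le> k \<Longrightarrow> eps_chain e x0 x0 (k * class_period)"
    using period_multiple_cycles[OF assms(3)] period by auto
  have "eps_chain e u v (class_period * k)" if "l + N \<le> k" for k
  proof -
    have "eps_chain e u v (d + (k - l) * class_period + b)"
      using eps_chain_trans[OF eps_chain_trans[OF d N] b] that by simp
    moreover have "d + (k - l) * class_period + b = class_period * l + class_period * (k - l)"
      using l by (simp add: algebra_simps)
    also have "\<dots> = class_period * k" using that by (simp add: add_mult_distrib2[symmetric])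
    ultimately show ?thesis by simp
  qed
  then show ?thesis by blast
qed

lemma eps_chain_within_piece_uniform:
  assumes "u \<in> piece i" "0 < e" "e \<le> period_scale"
  shows "\<exists>N. \<forall>v\<in>piece i. \<forall>k\<ge>N. eps_chain e u v (class_period * k)"
proof -
  have "piece i \<subseteq> (\<Union>c\<in>piece i. ball c (e / 2))" using assms(2) by auto
  from compactE_image[OF piece_compact open_ball this]
  obtain F where F: "F \<subseteq> piece i" "finite F" "piece i \<subseteq> (\<Union>c\<in>F. ball c (e / 2))" .
  have "\<exists>N. \<forall>k\<ge>N. eps_chain (e / 2) u c (class_period * k)" if "c \<in> F" for c
    using eps_chain_within_piece[OF assms(1)] F(1) that assms(2,3) by auto
  then obtain Nc where Nc: "\<And>c k. c \<in> F \<Longrightarrow> Nc c \<le> k \<Longrightarrow> eps_chain (e / 2) u c (class_period * k)"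
    by metis
  define N where "N = Max (insert 1 (Nc ` F))"
  have N: "1 \<le> N" "\<And>c. c \<in> F \<Longrightarrow> Nc c \<le> N" using F(2) by (auto simp: N_def)
  have "eps_chain e u v (class_period * k)" if v: "v \<in> piece i" and "N \<le> k" for v k
  proof -
    obtain c where c: "c \<in> F" "dist c v < e / 2" using F(3) v by (auto simp: dist_commute)
    have "1 \<le> class_period * k" using class_period_pos N(1) \<open>N \<le> k\<close> by (simp add: Suc_le_eq)
    moreover have "v \<in> X" using v piece_subset class_subset by blast
    ultimately have "eps_chain (e / 2 + e / 2) u v (class_period * k)"
      using eps_chain_perturb_end[OF Nc[OF c(1)] _ _ c(2)] N(2)[OF c(1)] \<open>N \<le> k\<close> by simp
    then show ?thesis by simp
  qed
  then show ?thesis by blast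
qed

text \<open>An e-chain of length class_period * k from a point of U to a point of V inside a piece is
  shadowed by an orbit that starts in U and is in V at time class_period * k.\<close>
lemma topologically_mixing_piece: "topologically_mixing (piece i) (f ^^ class_period)"
  unfolding topologically_mixing_def
proof (intro allI impI)
  fix U V assume UV: "openin (top_of_set (piece i)) U \<and> openin (top_of_set (piece i)) V \<and> U \<noteq> {} \<and> V \<noteq> {}"
  then obtain u v where "u \<in> U" "v \<in> V" by blast
  then have u: "u \<in> piece i" and v: "v \<in> piece i" using UV openin_imp_subset by blast+
  obtain \<rho>U where "0 < \<rho>U" and \<rho>U: "\<And>x. x \<in> piece i \<Longrightarrow> dist x u < \<rho>U \<Longrightarrow> x \<in> U"
    using UV \<open>u \<in> U\<close> unfolding openin_euclidean_subtopology_iff by blast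
  obtain \<rho>V where "0 < \<rho>V" and \<rho>V: "\<And>x. x \<in> piece i \<Longrightarrow> dist x v < \<rho>V \<Longrightarrow> x \<in> V"
    using UV \<open>v \<in> V\<close> unfolding openin_euclidean_subtopology_iff by blast
  obtain r where "0 < r" and r: "\<And>u y i. u \<in> piece i \<Longrightarrow> y \<in> C \<Longrightarrow> dist u y < r \<Longrightarrow> y \<in> piece i"
    using piece_locally_closed_in_class by blast
  define \<eta> where "\<eta> = min (min \<rho>U \<rho>V) r / 2"
  have \<eta>: "0 < \<eta>" "\<eta> < \<rho>U" "\<eta> < \<rho>V" "\<eta> < r"
    using \<open>0 < \<rho>U\<close> \<open>0 < \<rho>V\<close> \<open>0 < r\<close> by (auto simp: \<eta>_def)
  obtain \<delta> where "0 < \<delta>" and shadow: "\<And>u v L. u \<in> C \<Longrightarrow> v \<in> C \<Longrightarrow> 1 \<le> L \<Longrightarrow> eps_chain \<delta> u v L \<Longrightarrow>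
    \<exists>z\<in>C. dist z u \<le> \<eta> \<and> dist ((f ^^ L) z) v \<le> \<eta> \<and>
      (\<lambda>k. dist ((g ^^ k) z) ((g ^^ k) u)) \<longlonglongrightarrow> 0 \<and>
      (\<lambda>k. dist ((f ^^ k) ((f ^^ L) z)) ((f ^^ k) v)) \<longlonglongrightarrow> 0"
    using shadow_eps_chain[OF \<eta>(1)] by blast
  define e where "e = min \<delta> period_scale"
  have e: "0 < e" "e \<le> period_scale" "e \<le> \<delta>" using \<open>0 < \<delta>\<close> period_scale(1) by (auto simp: e_def)
  obtain N where N: "\<And>k. N \<le> k \<Longrightarrow> eps_chain e u v (class_period * k)"
    using eps_chain_within_piece[OF u v e(1,2)] by blast
  have "((f ^^ class_period) ^^ k) ` U \<inter> V \<noteq> {}" if "max N 1 \<le> k" for k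
  proof -
    have "1 \<le> class_period * k" using that class_period_pos by (simp add: Suc_le_eq)
    moreover have "eps_chain \<delta> u v (class_period * k)" using eps_chain_mono[OF N e(3)] that by simp
    ultimately obtain z where z: "z \<in> C" "dist z u \<le> \<eta>" "dist ((f ^^ (class_period * k)) z) v \<le> \<eta>"
      using shadow u v piece_subset by blast
    have "z \<in> U" using r[OF u z(1)] \<rho>U z(2) \<eta> by (simp add: dist_commute)
    moreover have "(f ^^ (class_period * k)) z \<in> V"
      using r[OF v class_funpow[OF z(1)]] \<rho>V z(3) \<eta> by (simp add: dist_commute)
    ultimately show ?thesis by (auto simp: funpow_mult)
  qed
  then show "\<exists>N. \<forall>k\<ge>N. ((f ^^ class_period) ^^ k) ` U \<inter> V \<noteq> {}" by blast
qed

lemma ipow_piece: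
  assumes "z \<in> piece i"
  shows "ipow (piece i) (f ^^ class_period) k z = ipow X f (int class_period * k) z"
proof (cases k rule: int_nat_or_neg_nat_cases)
  case (1 m)
  then show ?thesis by (simp add: ipow_def funpow_mult nat_mult_distrib)
next
  case (2 m)
  have i: "i < class_period" using piece_index_less[OF assms] .
  have inj: "inj_on (f ^^ class_period) (piece i)"
    by (rule inj_on_inverseI[where g = "g ^^ class_period"])
      (use funpow_g_f piece_subset class_subset in blast)
  have inv: "inv_into (piece i) (f ^^ class_period) w = (g ^^ class_period) w
      \<and> (g ^^ class_period) w \<in> piece i" if w: "w \<in> piece i" for w
  proof -
    obtain w' where w': "w' \<in> piece i" "w = (f ^^ class_period) w'"
      using funpow_period_image_piece[OF i] w by blast
    then have "(g ^^ class_period) w = w'" using funpow_g_f piece_subset class_subset by blast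
    then show ?thesis using inv_into_f_eq[OF inj w'(1)] w' by simp
  qed
  have "(inv_into (piece i) (f ^^ class_period) ^^ m) z = (g ^^ (class_period * m)) z
      \<and> (g ^^ (class_period * m)) z \<in> piece i"
  proof (induction m)
    case (Suc m)
    then show ?case using inv[of "(g ^^ (class_period * m)) z"] by (simp add: funpow_add)
  qed (simp add: assms)
  moreover have "ipow (piece i) (f ^^ class_period) k z = (inv_into (piece i) (f ^^ class_period) ^^ m) z"
    using 2 by (cases "m = 0") (simp_all add: ipow_def)
  moreover have "ipow X f (int class_period * k) z = (g ^^ (class_period * m)) z"
    using 2 ipow_neg_nat[of z "class_period * m"] assms piece_subset class_subset by auto
  ultimately show ?thesis by simp
qed

text \<open>Fill the gaps of y with orbit segments of f, and replace the finite stretch where the jumps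
  of y are not yet small by an e-chain inside the piece whose length is a multiple of
  class_period.\<close>
lemma pseudo_orbit_from_power:
  assumes y: "\<And>k. y k \<in> piece i" and E: "tendsto0_both (jump (f ^^ class_period) y)" and "0 < \<delta>"
  obtains x J K where "\<And>j. x j \<in> X" and "\<And>j. jump f x j \<le> \<delta>" and "tendsto0_both (jump f x)"
    and "\<And>j. J \<le> \<bar>j\<bar> \<Longrightarrow> x j \<in> C" and "\<And>k. K \<le> \<bar>k\<bar> \<Longrightarrow> x (int class_period * k) = y k"
proof -
  let ?n = class_period and ?y = "interpolate f class_period y"
  have n: "0 < ?n" "0 < int ?n" using class_period_pos by simp_all
  define e where "e = min \<delta> period_scale"
  have e: "0 < e" "e \<le> period_scale" "e \<le> \<delta>" using \<open>0 < \<delta>\<close> period_scale(1) by (auto simp: e_def)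
  obtain K where "0 \<le> K" and small: "\<And>k. K \<le> \<bar>k\<bar> \<Longrightarrow> jump (f ^^ ?n) y k < e"
    using tendsto0_both_eventually_less[OF E e(1)] by blast
  define A where "A = - K"
  obtain N where N: "\<forall>v\<in>piece i. \<forall>k\<ge>N. eps_chain e (y A) v (?n * k)"
    using eps_chain_within_piece_uniform[OF y e(1,2)] by blast
  define M where "M = nat (2 * K) + N"
  have "A + int M = K + int N" using \<open>0 \<le> K\<close> by (simp add: A_def M_def)
  have "eps_chain e (y A) (y (A + int M)) (?n * M)" using N y by (simp add: M_def)
  then obtain q where q: "pseudo_orbit_segment e q (?n * M)" "q 0 = y A" "q (?n * M) = y (A + int M)"
    unfolding eps_chain_def by blast
  define x where "x = splice_window ?y q (int ?n * A) (?n * M)"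
  have interpolate_in: "?y j \<in> C" for j
    unfolding interpolate_def using y piece_subset by (intro class_funpow) blast
  show ?thesis
  proof
    show "x j \<in> X" for j
      using q(1) interpolate_in class_subset
      by (auto simp: x_def splice_window_def pseudo_orbit_segment_def nat_le_iff)
    have "jump f x j < e" for j
      unfolding x_def
    proof (rule jump_splice_interpolate_less[OF n(1) e(1) _ q(2,3)])
      show "dist (f (q j)) (q (Suc j)) < e" if "j < ?n * M" for j
        using q(1) that unfolding pseudo_orbit_segment_def by simp
      show "jump (f ^^ ?n) y k < e" if "k < A \<or> A + int M \<le> k" for k
      proof (rule small)
        show "K \<le> \<bar>k\<bar>" using that \<open>A + int M = K + int N\<close> by (auto simp: A_def)
      qed
    qed
    then show "jump f x j \<le> \<delta>" for j using e(3) less_imp_le order_trans by blast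
    show "tendsto0_both (jump f x)"
      unfolding x_def by (rule tendsto0_both_jump_splice_interpolate[OF n(1) E q(2,3)])
    show "x j \<in> C" if "\<bar>int ?n * A\<bar> + int (?n * M) + 1 \<le> \<bar>j\<bar>" for j
    proof -
      have outside: "\<not> (int ?n * A \<le> j \<and> j \<le> int ?n * A + int (?n * M))" using that by linarith
      show ?thesis unfolding x_def splice_window_def if_not_P[OF outside] by (rule interpolate_in)
    qed
    show "x (int ?n * k) = y k" if "\<bar>A\<bar> + \<bar>A + int M\<bar> + 1 \<le> \<bar>k\<bar>" for k
      unfolding x_def by (rule splice_interpolate_mult[OF n(1)]) (use that in linarith)
  qed
qed

lemma mem_piece_if_asymptotic:
  assumes "z \<in> C" and y: "\<And>k. y k \<in> piece i"
    and asymptotic: "((\<lambda>k. dist (ipow X f (int class_period * k) z) (y k)) \<longlongrightarrow> 0) at_top"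
  shows "z \<in> piece i"
proof -
  let ?n = class_period
  obtain r where "0 < r" and r: "\<And>u y i. u \<in> piece i \<Longrightarrow> y \<in> C \<Longrightarrow> dist u y < r \<Longrightarrow> y \<in> piece i"
    using piece_locally_closed_in_class by blast
  obtain N where N: "\<forall>k\<ge>N. dist (ipow X f (int ?n * k) z) (y k) < r"
    using order_tendstoD(2)[OF asymptotic \<open>0 < r\<close>] unfolding eventually_at_top_linorder by blast
  define k where "k = nat (max N 0)"
  have "N \<le> int k" by (simp add: k_def)
  moreover have "ipow X f (int ?n * int k) z = (f ^^ (?n * k)) z"
    using ipow_nat[of "?n * k"] by simp
  ultimately have "dist (y (int k)) ((f ^^ (?n * k)) z) < r"
    using N by (metis dist_commute)
  then have in_i: "(f ^^ (?n * k)) z \<in> piece i"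
    using r[OF y class_funpow[OF \<open>z \<in> C\<close>]] by blast
  define j where "j = phase period_scale z"
  then have "z \<in> piece j" using \<open>z \<in> C\<close> by (simp add: piece_def)
  then have "(f ^^ (?n * k)) z \<in> piece ((j + ?n * k) mod ?n)" by (rule funpow_piece)
  moreover have "(j + ?n * k) mod ?n = j" using piece_index_less[OF \<open>z \<in> piece j\<close>] by simp
  ultimately have "i = j" using in_i pieces_disjoint by auto
  then show ?thesis using \<open>z \<in> piece j\<close> by simp
qed

lemma two_sided_limit_shadowing_piece: "two_sided_limit_shadowing (piece i) (f ^^ class_period)"
  unfolding two_sided_limit_shadowing_def
proof (intro allI impI)
  let ?n = class_period
  have n: "0 < ?n" "0 < int ?n" using class_period_pos by simp_all
  fix y assume "(\<forall>k. y k \<in> piece i) \<and> tendsto0_both (\<lambda>k. dist ((f ^^ ?n) (y k)) (y (k + 1)))"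
  then have y: "\<And>k. y k \<in> piece i" and E: "tendsto0_both (jump (f ^^ ?n) y)"
    unfolding jump_def[abs_def] by auto
  obtain \<delta> where "0 < \<delta>" and shadow: "\<And>x. (\<forall>k. x k \<in> X) \<Longrightarrow> (\<forall>k. jump f x k \<le> \<delta>) \<Longrightarrow>
    tendsto0_both (jump f x) \<Longrightarrow> \<exists>z\<in>X. (\<forall>k. dist (ipow X f k z) (x k) \<le> 1) \<and>
      tendsto0_both (\<lambda>k. dist (ipow X f k z) (x k))"
    using L_shadowingE[OF zero_less_one] by blast
  obtain x J K where x_in: "\<And>j. x j \<in> X" and x_jump: "\<And>j. jump f x j \<le> \<delta>"
    and x_tendsto: "tendsto0_both (jump f x)" and x_class: "\<And>j. J \<le> \<bar>j\<bar> \<Longrightarrow> x j \<in> C"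
    and x_y: "\<And>k. K \<le> \<bar>k\<bar> \<Longrightarrow> x (int ?n * k) = y k"
    using pseudo_orbit_from_power[OF y E \<open>0 < \<delta>\<close>] by blast
  obtain z where z: "z \<in> X" and asymptotic: "tendsto0_both (\<lambda>j. dist (ipow X f j z) (x j))"
    using shadow x_in x_jump x_tendsto by blast
  have "z \<in> C" by (rule mem_class_if_asymptotic[OF z x_class asymptotic])
  define D where "D k = dist (ipow X f (int ?n * k) z) (y k)" for k
  have D: "tendsto0_both D"
  proof (rule tendsto0_both_cong)
    show "tendsto0_both (\<lambda>k. dist (ipow X f (int ?n * k) z) (x (int ?n * k)))"
      using tendsto0_both_compose[OF asymptotic filterlim_int_mult_at_top filterlim_int_mult_at_bot] n(2)
      by simp
    show "D k = dist (ipow X f (int ?n * k) z) (x (int ?n * k))" if "k \<le> - K \<or> K \<le> k" for k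
      using that x_y[of k] by (auto simp: D_def)
  qed
  have "z \<in> piece i"
    by (rule mem_piece_if_asymptotic[OF \<open>z \<in> C\<close> y D[unfolded tendsto0_both_def D_def, THEN conjunct1]])
  moreover have "(\<lambda>k. dist (ipow (piece i) (f ^^ ?n) k z) (y k)) = D"
    using ipow_piece[OF \<open>z \<in> piece i\<close>] by (simp add: D_def fun_eq_iff)
  ultimately show "\<exists>z\<in>piece i. tendsto0_both (\<lambda>k. dist (ipow (piece i) (f ^^ ?n) k z) (y k))"
    using D by auto
qed

end

theorem theoremE:
  fixes X :: "'a::metric_space set" and f :: "'a \<Rightarrow> 'a" and C :: "'a set"
  assumes "compact X"
    and "\<exists>g. homeomorphism X X f g"
    and "L_shadowing X f"
    and "chain_recurrent_class X f C"
  shows "\<exists>n::nat. \<exists>Cs::nat \<Rightarrow> 'a set. n \<ge> 1 \<and>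
     (\<forall>i<n. compact (Cs i) \<and> Cs i \<subseteq> C \<and> (f ^^ n) ` Cs i = Cs i) \<and>
     (\<forall>i<n. \<forall>j<n. i \<noteq> j \<longrightarrow> Cs i \<inter> Cs j = {}) \<and>
     C = (\<Union>i<n. Cs i) \<and>
     (\<forall>i<n. f ` Cs i = Cs (Suc i mod n)) \<and>
     (\<forall>i<n. topologically_mixing (Cs i) (f ^^ n) \<and>
            two_sided_limit_shadowing (Cs i) (f ^^ n))"
proof -
  obtain g where "homeomorphism X X f g" using assms(2) by blast
  obtain x0 where "x0 \<in> chain_class X f x0" and C: "C = chain_class X f x0"
    using assms(4) unfolding chain_recurrent_class_def by blast
  interpret L_shadowing_chain_class X f g x0
    by unfold_locales (fact assms(1) assms(3) \<open>homeomorphism X X f g\<close> \<open>x0 \<in> chain_class X f x0\<close>)+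
  show ?thesis
    unfolding C
    using class_period_pos piece_compact piece_subset funpow_period_image_piece pieces_disjoint
      class_eq_Union_pieces image_piece topologically_mixing_piece two_sided_limit_shadowing_piece
    by (intro exI[of _ class_period] exI[of _ piece]) (auto simp: Suc_le_eq)
qed

end
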